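(* Let $F(\lambda)$, $\lambda\in(\sigma,\tau)$, satisfy the standing assumptions (A1)–(A3) below. Suppose there is a family of quadratic forms $\mathfrak f(\lambda)[y]$, $\lambda\in(\sigma,\tau)$, such that: (i) for every $\lambda_0\in(\sigma,\tau)$, $\mathfrak f(\lambda_0)$ is the closure of the form $y\mapsto\langle F(\lambda_0)y,y\rangle_{\mathfrak H}$ defined on $\mathfrak D(F(\lambda_0))$; (ii) the domain of $\mathfrak f(\lambda_0)$ is a subspace $\mathfrak D(\mathfrak f)$ independent of $\lambda_0$; (iii) for all $\lambda_1<\lambda_2$ in $(\sigma,\tau)$ the form $\mathfrak f(\lambda_1)[y]-\mathfrak f(\lambda_2)[y]$ on $\mathfrak D(\mathfrak f)$ is positive (strictly positive for $y\neq 0$). Then for every half-open interval $[\xi_1,\xi_2)$ with $[\xi_1,\xi_2]\subset(\sigma,\tau)$, \[ \mathcal N_F(\xi_1,\xi_2)=\nu_F(\xi_2)-\nu_F(\xi_1). \]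
   Context: Standing assumptions on $F$: (A1) for every $\lambda_0\in(\sigma,\tau)$, $F(\lambda_0)$ is a self-adjoint operator in a Hilbert space $\mathfrak H$ with compact resolvent; (A2) for every $\lambda_0\in(\sigma,\tau)$ there exist a real $\mu$ and a neighbourhood $\mathcal U(\lambda_0)$ with compact closure in $(\sigma,\tau)$ such that $F(\lambda_1)-\mu\geqslant 0$ for all $\lambda_1\in\mathcal U(\lambda_0)$; (A3) $\lambda\mapsto (F(\lambda)-i)^{-1}$ is continuous on $(\sigma,\tau)$ in the operator norm. A number $\lambda_0$ is an eigenvalue of multiplicity $m$ of $F$ if $0$ is an eigenvalue of multiplicity $m$ of $F(\lambda_0)$. $\mathcal N_F(\xi_1,\xi_2)$ is the number of eigenvalues of $F$ in $[\xi_1,\xi_2)$ counted with multiplicity; $\nu_F(\lambda_0)$ is the number of negative eigenvalues of $F(\lambda_0)$ counted with multiplicity. Closure of a quadratic form is in the sense of Kato's perturbation theory. *)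

theory Defs
  imports "HOL-Analysis.Analysis"
begin

text \<open>A complex Hilbert space is modelled by a type 'h of class banach (complete real
normed space, giving norm, limits, closure, compactness) together with a complex
scalar multiplication sc extending the real one and a complex inner product ip
(linear in the first, conjugate linear in the second argument) whose induced norm
is the norm of the type.\<close>

definition complex_hilbert ::
  "(complex \<Rightarrow> 'h::banach \<Rightarrow> 'h) \<Rightarrow> ('h \<Rightarrow> 'h \<Rightarrow> complex) \<Rightarrow> bool" where
  "complex_hilbert sc ip \<longleftrightarrow>
     Vector_Spaces.vector_space sc \<and>
     (\<forall>r x. sc (complex_of_real r) x = r *\<^sub>R x) \<and>
     (\<forall>x y z. ip (x + y) z = ip x z + ip y z) \<and>
     (\<forall>c x y. ip (sc c x) y = c * ip x y) \<and>
     (\<forall>x y. ip y x = cnj (ip x y)) \<and>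
     (\<forall>x. ip x x = complex_of_real ((norm x)\<^sup>2))"

definition linear_on :: "(complex \<Rightarrow> 'h::banach \<Rightarrow> 'h) \<Rightarrow> 'h set \<Rightarrow> ('h \<Rightarrow> 'h) \<Rightarrow> bool" where
  "linear_on sc D T \<longleftrightarrow> module.subspace sc D \<and>
     (\<forall>x\<in>D. \<forall>y\<in>D. T (x + y) = T x + T y) \<and>
     (\<forall>c. \<forall>x\<in>D. T (sc c x) = sc c (T x))"

definition self_adjoint ::
  "(complex \<Rightarrow> 'h::banach \<Rightarrow> 'h) \<Rightarrow> ('h \<Rightarrow> 'h \<Rightarrow> complex) \<Rightarrow> 'h set \<Rightarrow> ('h \<Rightarrow> 'h) \<Rightarrow> bool" where
  "self_adjoint sc ip D T \<longleftrightarrow>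
     linear_on sc D T \<and> closure D = UNIV \<and>
     (\<forall>x\<in>D. \<forall>y\<in>D. ip (T x) y = ip x (T y)) \<and>
     (\<forall>y z. (\<forall>x\<in>D. ip (T x) y = ip x z) \<longrightarrow> y \<in> D \<and> T y = z)"

definition in_resolvent_set ::
  "(complex \<Rightarrow> 'h::banach \<Rightarrow> 'h) \<Rightarrow> 'h set \<Rightarrow> ('h \<Rightarrow> 'h) \<Rightarrow> complex \<Rightarrow> bool" where
  "in_resolvent_set sc D T z \<longleftrightarrow> (\<forall>y. \<exists>!x. x \<in> D \<and> T x - sc z x = y) \<and>
     bounded ((\<lambda>y. THE x. x \<in> D \<and> T x - sc z x = y) ` cball 0 1)"

definition resolvent ::
  "(complex \<Rightarrow> 'h::banach \<Rightarrow> 'h) \<Rightarrow> 'h set \<Rightarrow> ('h \<Rightarrow> 'h) \<Rightarrow> complex \<Rightarrow> 'h \<Rightarrow> 'h" where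
  "resolvent sc D T z = (\<lambda>y. THE x. x \<in> D \<and> T x - sc z x = y)"

definition compact_operator :: "('h::banach \<Rightarrow> 'h) \<Rightarrow> bool" where
  "compact_operator R \<longleftrightarrow> compact (closure (R ` cball 0 1))"

definition compact_resolvent ::
  "(complex \<Rightarrow> 'h::banach \<Rightarrow> 'h) \<Rightarrow> 'h set \<Rightarrow> ('h \<Rightarrow> 'h) \<Rightarrow> bool" where
  "compact_resolvent sc D T \<longleftrightarrow>
     (\<exists>z. in_resolvent_set sc D T z \<and> compact_operator (resolvent sc D T z))"

definition eig_mult ::
  "(complex \<Rightarrow> 'h::banach \<Rightarrow> 'h) \<Rightarrow> 'h set \<Rightarrow> ('h \<Rightarrow> 'h) \<Rightarrow> real \<Rightarrow> nat" where
  "eig_mult sc D T mu = vector_space.dim sc {x \<in> D. T x = sc (complex_of_real mu) x}"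

definition is_eigenvalue ::
  "(complex \<Rightarrow> 'h::banach \<Rightarrow> 'h) \<Rightarrow> 'h set \<Rightarrow> ('h \<Rightarrow> 'h) \<Rightarrow> real \<Rightarrow> bool" where
  "is_eigenvalue sc D T mu \<longleftrightarrow> (\<exists>x\<in>D. x \<noteq> 0 \<and> T x = sc (complex_of_real mu) x)"

text \<open>N_F(xi1,xi2): number of eigenvalues of F in [xi1,xi2) counted with multiplicity;
lambda is an eigenvalue of F of multiplicity m iff 0 is an eigenvalue of multiplicity m of F(lambda).\<close>
definition N_F ::
  "(complex \<Rightarrow> 'h::banach \<Rightarrow> 'h) \<Rightarrow> (real \<Rightarrow> 'h set) \<Rightarrow> (real \<Rightarrow> 'h \<Rightarrow> 'h) \<Rightarrow> real \<Rightarrow> real \<Rightarrow> nat" where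
  "N_F sc D T xi1 xi2 =
     (\<Sum>l\<in>{l. xi1 \<le> l \<and> l < xi2 \<and> is_eigenvalue sc (D l) (T l) 0}. eig_mult sc (D l) (T l) 0)"

definition nu_F ::
  "(complex \<Rightarrow> 'h::banach \<Rightarrow> 'h) \<Rightarrow> (real \<Rightarrow> 'h set) \<Rightarrow> (real \<Rightarrow> 'h \<Rightarrow> 'h) \<Rightarrow> real \<Rightarrow> nat" where
  "nu_F sc D T l =
     (\<Sum>mu\<in>{mu. mu < 0 \<and> is_eigenvalue sc (D l) (T l) mu}. eig_mult sc (D l) (T l) mu)"

definition standing_assumptions ::
  "(complex \<Rightarrow> 'h::banach \<Rightarrow> 'h) \<Rightarrow> ('h \<Rightarrow> 'h \<Rightarrow> complex) \<Rightarrow> ereal \<Rightarrow> ereal \<Rightarrow>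
   (real \<Rightarrow> 'h set) \<Rightarrow> (real \<Rightarrow> 'h \<Rightarrow> 'h) \<Rightarrow> bool" where
  "standing_assumptions sc ip \<sigma> \<tau> D T \<longleftrightarrow>
     (let I = {l. \<sigma> < ereal l \<and> ereal l < \<tau>} in
     \<comment> \<open>(A1)\<close>
     (\<forall>l\<in>I. self_adjoint sc ip (D l) (T l) \<and> compact_resolvent sc (D l) (T l)) \<and>
     \<comment> \<open>(A2)\<close>
     (\<forall>l0\<in>I. \<exists>mu::real. \<exists>U. open U \<and> l0 \<in> U \<and> compact (closure U) \<and> closure U \<subseteq> I \<and>
        (\<forall>l1\<in>U. \<forall>x\<in>D l1. 0 \<le> Re (ip (T l1 x - sc (complex_of_real mu) x) x))) \<and>
     \<comment> \<open>(A3): continuity of (F(l) - i)^(-1) in operator norm\<close>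
     (\<forall>l0\<in>I. ((\<lambda>l. onorm (\<lambda>y. resolvent sc (D l) (T l) \<i> y - resolvent sc (D l0) (T l0) \<i> y))
                \<longlongrightarrow> 0) (at l0 within I)))"

definition form_convergent :: "'h set \<Rightarrow> ('h::banach \<Rightarrow> real) \<Rightarrow> (nat \<Rightarrow> 'h) \<Rightarrow> 'h \<Rightarrow> bool" where
  "form_convergent D q s u \<longleftrightarrow> (\<forall>n. s n \<in> D) \<and> s \<longlonglongrightarrow> u \<and>
     (\<forall>e>0. \<exists>N. \<forall>m\<ge>N. \<forall>n\<ge>N. \<bar>q (s m - s n)\<bar> < e)"

definition is_form_closure :: "'h set \<Rightarrow> ('h::banach \<Rightarrow> real) \<Rightarrow> 'h set \<Rightarrow> ('h \<Rightarrow> real) \<Rightarrow> bool" where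
  "is_form_closure D q Df f \<longleftrightarrow>
     Df = {u. \<exists>s. form_convergent D q s u} \<and>
     (\<forall>u s. form_convergent D q s u \<longrightarrow> (\<lambda>n. q (s n)) \<longlonglongrightarrow> f u)"

end

theory Submission
  imports Defs
begin

text \<open>
For each \<open>\<lambda>\<close> the operator \<open>F(\<lambda>)\<close> is semibounded with compact resolvent, so its eigenvalues below
any level are finite in number and are described variationally by the quadratic form.  If
\<open>\<lambda>1 < \<lambda>2\<close>, the span of the nonpositive eigenvectors of \<open>F(\<lambda>1)\<close> has dimension \<open>\<nu>(\<lambda>1) + \<kappa>(\<lambda>1)\<close>
(\<open>\<kappa>\<close> the multiplicity of the eigenvalue \<open>0\<close>), and by the strict monotonicity of the forms it meets
the complement of the negative eigenvectors of \<open>F(\<lambda>2)\<close> only in \<open>0\<close>; hence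
\<open>\<nu>(\<lambda>1) + \<kappa>(\<lambda>1) \<le> \<nu>(\<lambda>2)\<close>.  Conversely, norm continuity of the resolvent makes the counts of
negative and of nonpositive eigenvalues lower resp. upper semicontinuous; this is seen through the
form \<open>\<parallel>R y\<parallel>\<^sup>2 - s Re\<langle>R y, y\<rangle>\<close>, \<open>R = (F - \<i>)\<^sup>-\<^sup>1\<close>, which is continuous in \<open>\<lambda>\<close>.  Together,
\<open>\<nu>\<close> is constant left of each point and jumps by \<open>\<kappa>(\<lambda>)\<close> just right of \<open>\<lambda>\<close>, and summing the
jumps over \<open>[\<xi>1, \<xi>2)\<close> gives the count.
\<close>

lemma linear_nonneg_imp_zero:
  fixes b c :: real
  assumes "\<And>t. 0 \<le> b * t + c * t\<^sup>2"
  shows "b = 0"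
proof (rule ccontr)
  assume b: "b \<noteq> 0"
  define k where "k = \<bar>c\<bar> + 1"
  have k: "k > 0" "c - k < 0" by (auto simp: k_def)
  have "b * (- b / k) + c * (- b / k)\<^sup>2 = b\<^sup>2 * (c - k) / k\<^sup>2"
    using k by (simp add: field_simps power2_eq_square)
  also have "\<dots> < 0" using b k by (intro divide_neg_pos mult_pos_neg) auto
  finally show False using assms[of "- b / k"] by simp
qed

lemma quadratic_nonneg_discrim_le:
  fixes a b c :: real
  assumes nonneg: "\<And>t. 0 \<le> a + 2 * b * t + c * t\<^sup>2" and "0 \<le> c"
  shows "b\<^sup>2 \<le> a * c"
proof (cases "c = 0")
  case True
  have "b = 0"
    using linear_nonneg_imp_zero[of "2 * b" "1"] nonneg[of "- (a + 1) / (2 * b)"] True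
    by (cases "b = 0") (auto simp: field_simps)
  thus ?thesis using True by simp
next
  case False
  hence c: "c > 0" using assms by simp
  have "0 \<le> a + 2 * b * (- b / c) + c * (- b / c)\<^sup>2" by (rule nonneg)
  also have "\<dots> = a - b\<^sup>2 / c" using c by (simp add: field_simps power2_eq_square)
  finally show ?thesis using c by (simp add: divide_le_eq mult.commute)
qed

section \<open>Inner product calculus\<close>

locale hilbert_space =
  fixes sc :: "complex \<Rightarrow> 'h::banach \<Rightarrow> 'h" and ip :: "'h \<Rightarrow> 'h \<Rightarrow> complex"
  assumes hilbert: "complex_hilbert sc ip"
begin

sublocale V: vector_space sc
  using hilbert unfolding complex_hilbert_def by blast

lemma sc_of_real: "sc (complex_of_real r) x = r *\<^sub>R x"
  and ip_add_left: "ip (x + y) z = ip x z + ip y z"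
  and ip_sc_left: "ip (sc c x) y = c * ip x y"
  and ip_cnj: "ip x y = cnj (ip y x)"
  and ip_self: "ip x x = complex_of_real ((norm x)\<^sup>2)"
  using hilbert unfolding complex_hilbert_def by blast+

lemma ip_add_right: "ip x (y + z) = ip x y + ip x z"
  by (subst (1 2 3) ip_cnj) (simp add: ip_add_left)

lemma ip_sc_right: "ip x (sc c y) = cnj c * ip x y"
  by (subst (1 2) ip_cnj) (simp add: ip_sc_left)

lemma ip_zero_left [simp]: "ip 0 y = 0"
  using ip_add_left[of 0 0 y] by simp

lemma ip_zero_right [simp]: "ip y 0 = 0"
  using ip_add_right[of y 0 0] by simp

lemma ip_eq_0_commute: "ip x y = 0 \<longleftrightarrow> ip y x = 0"
  by (metis ip_cnj complex_cnj_zero)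

lemma ip_minus_left: "ip (- x) y = - ip x y"
  using ip_add_left[of x "- x" y] by (simp add: neg_eq_iff_add_eq_0[symmetric])

lemma ip_minus_right: "ip y (- x) = - ip y x"
  using ip_add_right[of y x "- x"] by (simp add: neg_eq_iff_add_eq_0[symmetric])

lemma ip_diff_left: "ip (x - y) z = ip x z - ip y z"
  using ip_add_left[of x "- y" z] by (simp add: ip_minus_left)

lemma ip_diff_right: "ip z (x - y) = ip z x - ip z y"
  using ip_add_right[of z x "- y"] by (simp add: ip_minus_right)

lemma ip_scaleR_left: "ip (r *\<^sub>R x) y = of_real r * ip x y"
  using ip_sc_left[of "complex_of_real r"] by (simp add: sc_of_real)

lemma ip_scaleR_right: "ip x (r *\<^sub>R y) = of_real r * ip x y"
  using ip_sc_right[of x "complex_of_real r"] by (simp add: sc_of_real)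

lemma ip_sum_left: "ip (sum f S) y = (\<Sum>a\<in>S. ip (f a) y)"
  by (induction S rule: infinite_finite_induct) (auto simp: ip_add_left)

lemma ip_sum_right: "ip y (sum f S) = (\<Sum>a\<in>S. ip y (f a))"
  by (induction S rule: infinite_finite_induct) (auto simp: ip_add_right)

lemma Re_ip_self: "Re (ip x x) = (norm x)\<^sup>2"
  by (simp add: ip_self)

lemma Re_ip_commute: "Re (ip y x) = Re (ip x y)"
  by (simp add: ip_cnj[of y x])

lemma norm_add_sq: "(norm (x + y))\<^sup>2 = (norm x)\<^sup>2 + 2 * Re (ip x y) + (norm y)\<^sup>2"
  using Re_ip_self[of "x + y"]
  by (simp add: ip_add_left ip_add_right Re_ip_self Re_ip_commute[of y x])

lemma norm_diff_sq: "(norm (x - y))\<^sup>2 = (norm x)\<^sup>2 - 2 * Re (ip x y) + (norm y)\<^sup>2"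
  using norm_add_sq[of x "- y"] by (simp add: ip_minus_right)

lemma parallelogram_law:
  fixes x y :: 'h
  shows "(norm (x + y))\<^sup>2 + (norm (x - y))\<^sup>2 = 2 * (norm x)\<^sup>2 + 2 * (norm y)\<^sup>2"
  by (simp add: norm_add_sq norm_diff_sq)

lemma Re_ip_le: "Re (ip x y) \<le> norm x * norm y"
proof -
  have "(norm (x + y))\<^sup>2 \<le> (norm x + norm y)\<^sup>2"
    by (simp add: power_mono norm_triangle_ineq)
  thus ?thesis by (simp add: norm_add_sq power2_sum)
qed

lemma abs_Re_ip_le: "\<bar>Re (ip x y)\<bar> \<le> norm x * norm y"
  using Re_ip_le[of x y] Re_ip_le[of x "- y"] by (simp add: ip_minus_right)

lemma norm_sc: "norm (sc c x) = cmod c * norm x"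
proof -
  have "ip (sc c x) (sc c x) = (c * cnj c) * ip x x" by (simp add: ip_sc_left ip_sc_right)
  also have "\<dots> = complex_of_real ((cmod c * norm x)\<^sup>2)"
    by (simp add: complex_norm_square[symmetric] ip_self power_mult_distrib)
  finally have "(norm (sc c x))\<^sup>2 = (cmod c * norm x)\<^sup>2" by (metis Re_complex_of_real Re_ip_self)
  thus ?thesis by (simp add: power2_eq_iff_nonneg)
qed

text \<open>Rotate \<open>x\<close> by the phase of \<open>ip x y\<close> to reduce to \<open>Re_ip_le\<close>.\<close>

lemma cmod_ip_le: "cmod (ip x y) \<le> norm x * norm y"
proof (cases "ip x y = 0")
  case False
  define c where "c = cnj (ip x y) / complex_of_real (cmod (ip x y))"
  have "cnj (ip x y) * ip x y = complex_of_real (cmod (ip x y) * cmod (ip x y))"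
    using complex_norm_square[of "ip x y"] by (simp add: mult.commute power2_eq_square)
  hence "ip (sc c x) y = complex_of_real (cmod (ip x y))"
    using False by (simp add: c_def ip_sc_left)
  hence "cmod (ip x y) = Re (ip (sc c x) y)" by simp
  also have "\<dots> \<le> norm (sc c x) * norm y" by (rule Re_ip_le)
  finally show ?thesis using False by (simp add: norm_sc c_def norm_divide)
qed simp

lemma sc_scaleR: "sc c (r *\<^sub>R x) = r *\<^sub>R sc c x"
  by (metis sc_of_real V.scale_scale mult.commute)

lemma bounded_linear_sc: "bounded_linear (sc c)"
proof (rule bounded_linear_intro[of _ "cmod c"])
  show "sc c (r *\<^sub>R x) = r *\<^sub>R sc c x" for r x by (rule sc_scaleR)
  show "norm (sc c x) \<le> norm x * cmod c" for x by (simp add: norm_sc mult.commute)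
qed (rule V.scale_right_distrib)

lemma bounded_bilinear_ip: "bounded_bilinear ip"
proof (rule bounded_bilinear.intro)
  show "\<exists>K. \<forall>a b. norm (ip a b) \<le> norm a * norm b * K"
    by (rule exI[of _ 1]) (simp add: cmod_ip_le)
qed (simp_all add: ip_add_left ip_add_right ip_scaleR_left ip_scaleR_right scaleR_conv_of_real)

lemmas tendsto_ip [tendsto_intros] = bounded_bilinear.tendsto[OF bounded_bilinear_ip]

lemmas tendsto_sc [tendsto_intros] = bounded_linear.tendsto[OF bounded_linear_sc]

lemma tendsto_sc_left:
  assumes "(f \<longlongrightarrow> a) F"
  shows "((\<lambda>t. sc (f t) x) \<longlongrightarrow> sc a x) F"
proof -
  have "((\<lambda>t. cmod (f t - a) * norm x) \<longlongrightarrow> 0) F"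
    using assms by (intro tendsto_mult_left_zero tendsto_norm_zero LIM_zero)
  hence "((\<lambda>t. norm (sc (f t) x - sc a x)) \<longlongrightarrow> 0) F"
    by (simp add: norm_sc V.scale_left_diff_distrib[symmetric])
  thus ?thesis by (simp add: tendsto_norm_zero_iff LIM_zero_cancel)
qed

end

section \<open>Orthonormal lists and orthogonal projection\<close>

context hilbert_space
begin

definition lincomb :: "(nat \<Rightarrow> complex) \<Rightarrow> 'h list \<Rightarrow> 'h" where
  "lincomb c es = (\<Sum>j<length es. sc (c j) (es!j))"

definition orthonormal :: "'h list \<Rightarrow> bool" where
  "orthonormal es \<longleftrightarrow>
     (\<forall>i<length es. \<forall>j<length es. ip (es!i) (es!j) = (if i = j then 1 else 0))"

definition orth_to :: "'h list \<Rightarrow> 'h \<Rightarrow> bool" where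
  "orth_to es y \<longleftrightarrow> (\<forall>e\<in>set es. ip y e = 0)"

definition proj :: "'h list \<Rightarrow> 'h \<Rightarrow> 'h" where
  "proj es y = lincomb (\<lambda>j. ip y (es!j)) es"

lemma orthonormal_norm:
  assumes "orthonormal es" "e \<in> set es"
  shows "norm e = 1"
proof -
  obtain i where i: "i < length es" "e = es!i" using assms(2) by (auto simp: in_set_conv_nth)
  hence "ip e e = 1" using assms(1) by (simp add: orthonormal_def)
  hence "(norm e)\<^sup>2 = 1" by (metis Re_ip_self one_complex.sel(1))
  thus ?thesis using norm_ge_zero[of e] by (auto simp: power2_eq_1_iff)
qed

lemma orthonormal_distinct: "orthonormal es \<Longrightarrow> distinct es"
  unfolding distinct_conv_nth orthonormal_def by (metis zero_neq_one)

lemma orthonormal_iff_set: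
  "orthonormal es \<longleftrightarrow>
     distinct es \<and> (\<forall>e\<in>set es. \<forall>f\<in>set es. ip e f = (if e = f then 1 else 0))"
proof
  assume o: "orthonormal es"
  hence d: "distinct es" by (rule orthonormal_distinct)
  have "ip e f = (if e = f then 1 else 0)" if ef: "e \<in> set es" "f \<in> set es" for e f
  proof -
    obtain i j where ij: "i < length es" "j < length es" "e = es!i" "f = es!j"
      using ef by (auto simp: in_set_conv_nth)
    have "(e = f) = (i = j)" using ij d by (simp add: nth_eq_iff_index_eq)
    thus ?thesis using o ij by (simp add: orthonormal_def)
  qed
  thus "distinct es \<and> (\<forall>e\<in>set es. \<forall>f\<in>set es. ip e f = (if e = f then 1 else 0))"
    using d by blast
qed (auto simp: orthonormal_def nth_eq_iff_index_eq)

lemma orthonormal_filter: "orthonormal es \<Longrightarrow> orthonormal (filter P es)"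
  unfolding orthonormal_iff_set by auto

lemma orthonormal_snoc:
  assumes "orthonormal es" "norm e = 1" "orth_to es e"
  shows "orthonormal (es @ [e])"
proof -
  have "ip e (es!j) = 0" "ip (es!j) e = 0" if "j < length es" for j
    using assms that ip_eq_0_commute by (auto simp: orth_to_def)
  thus ?thesis using assms(1,2)
    by (auto simp: orthonormal_def nth_append ip_self less_Suc_eq)
qed

lemma ip_lincomb_left:
  assumes "orthonormal es" "k < length es"
  shows "ip (lincomb c es) (es!k) = c k"
proof -
  have "ip (lincomb c es) (es!k) = (\<Sum>j<length es. c j * ip (es!j) (es!k))"
    by (simp add: lincomb_def ip_sum_left ip_sc_left)
  also have "\<dots> = (\<Sum>j<length es. if j = k then c j else 0)"
    using assms by (intro sum.cong) (auto simp: orthonormal_def)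
  finally show ?thesis using assms by simp
qed

lemma ip_lincomb_lincomb:
  assumes "orthonormal es"
  shows "ip (lincomb a es) (lincomb b es) = (\<Sum>j<length es. a j * cnj (b j))"
  using assms
  by (auto simp: lincomb_def[of b] ip_sum_right ip_sc_right ip_lincomb_left intro!: sum.cong)

lemma norm_lincomb_sq:
  assumes "orthonormal es"
  shows "(norm (lincomb c es))\<^sup>2 = (\<Sum>j<length es. (cmod (c j))\<^sup>2)"
  using assms Re_ip_self[of "lincomb c es"]
  by (simp add: ip_lincomb_lincomb Re_sum complex_mult_cnj cmod_power2)

lemma lincomb_eq_0_iff:
  assumes "orthonormal es"
  shows "lincomb c es = 0 \<longleftrightarrow> (\<forall>j<length es. c j = 0)"
  using ip_lincomb_left[OF assms] by (auto simp: lincomb_def) (metis ip_zero_left)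

lemma lincomb_in_subspace: "V.subspace S \<Longrightarrow> set es \<subseteq> S \<Longrightarrow> lincomb c es \<in> S"
  unfolding lincomb_def by (intro V.subspace_sum) (auto intro!: V.subspace_scale)

lemma lincomb_as_set_sum:
  assumes "distinct es"
  shows "lincomb (\<lambda>j. c (es!j)) es = (\<Sum>e\<in>set es. sc (c e) e)"
  unfolding lincomb_def
  using sum.reindex_bij_betw[OF bij_betw_nth[OF assms refl refl], of "\<lambda>e. sc (c e) e"] by simp

lemma proj_as_set_sum: "distinct es \<Longrightarrow> proj es y = (\<Sum>e\<in>set es. sc (ip y e) e)"
  unfolding proj_def by (rule lincomb_as_set_sum)

lemma orth_to_minus_proj: "orthonormal es \<Longrightarrow> orth_to es (y - proj es y)"
  unfolding orth_to_def by (auto simp: in_set_conv_nth proj_def ip_diff_left ip_lincomb_left)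

lemma proj_eq_0: "orth_to es y \<Longrightarrow> proj es y = 0"
  by (simp add: proj_def lincomb_def orth_to_def)

lemma proj_in_subspace: "V.subspace S \<Longrightarrow> set es \<subseteq> S \<Longrightarrow> proj es y \<in> S"
  unfolding proj_def by (rule lincomb_in_subspace)

lemma ip_lincomb_eq_0: "orth_to es y \<Longrightarrow> ip (lincomb c es) y = 0"
  using ip_eq_0_commute
  by (auto simp: lincomb_def orth_to_def ip_sum_left ip_sc_left intro!: sum.neutral)

lemma orth_to_add: "orth_to es a \<Longrightarrow> orth_to es b \<Longrightarrow> orth_to es (a + b)"
  and orth_to_sc: "orth_to es a \<Longrightarrow> orth_to es (sc c a)"
  and orth_to_scaleR: "orth_to es a \<Longrightarrow> orth_to es (r *\<^sub>R a)"
  by (simp_all add: orth_to_def ip_add_left ip_sc_left ip_scaleR_left)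

lemma orthonormal_independent:
  assumes "orthonormal es"
  shows "V.independent (set es)"
proof
  assume "V.dependent (set es)"
  then obtain u where u: "\<exists>v\<in>set es. u v \<noteq> 0" "(\<Sum>v\<in>set es. sc (u v) v) = 0"
    using V.dependent_finite by blast
  hence "\<forall>j<length es. u (es!j) = 0"
    using assms orthonormal_distinct lincomb_as_set_sum lincomb_eq_0_iff by metis
  thus False using u(1) by (auto simp: in_set_conv_nth)
qed

lemma dim_eq_length_orthonormal:
  assumes "V.subspace E" "orthonormal es" "set es \<subseteq> E" "\<And>v. v \<in> E \<Longrightarrow> \<exists>c. v = lincomb c es"
  shows "V.dim E = length es"
proof -
  have "lincomb c es \<in> V.span (set es)" for c
    unfolding lincomb_def by (intro V.span_sum V.span_scale V.span_base) simp
  hence sp: "V.span (set es) = E" using assms by (intro V.span_subspace) auto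
  moreover have "V.span E = E" using assms(1) by simp
  ultimately have "V.span (set es) = V.span E" by (rule trans[OF _ sym])
  hence "V.dim E = card (set es)"
    by (rule V.dim_eq_card[OF _ orthonormal_independent[OF assms(2)]])
  thus ?thesis using distinct_card[OF orthonormal_distinct[OF assms(2)]] by simp
qed

lemma sum_sc_eliminate:
  assumes "finite J" "j0 \<in> J"
  shows "(\<Sum>j\<in>J - {j0}. sc (c j) (a j - sc (b j) (a j0))) =
    (\<Sum>j\<in>J. sc (if j = j0 then - (\<Sum>i\<in>J - {j0}. c i * b i) else c j) (a j))"
proof -
  have "(\<Sum>j\<in>J - {j0}. sc (c j) (a j - sc (b j) (a j0))) =
      (\<Sum>j\<in>J - {j0}. sc (c j) (a j)) - sc (\<Sum>i\<in>J - {j0}. c i * b i) (a j0)"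
    by (simp add: V.scale_right_diff_distrib sum_subtractf V.scale_sum_left)
  moreover have "(\<Sum>j\<in>J - {j0}. sc (if j = j0 then - (\<Sum>i\<in>J - {j0}. c i * b i) else c j) (a j)) =
      (\<Sum>j\<in>J - {j0}. sc (c j) (a j))"
    by (intro sum.cong) auto
  ultimately show ?thesis using assms by (simp add: sum.remove V.scale_minus_left)
qed

text \<open>Gaussian elimination: each vector of \<open>es\<close> imposes one linear condition on the coefficients,
so more than \<open>length es\<close> vectors have a nontrivial combination orthogonal to \<open>es\<close>.\<close>

lemma exists_combination_orth_to:
  assumes "finite J" "card J > length es"
  shows "\<exists>c. (\<exists>j\<in>J. c j \<noteq> 0) \<and> orth_to es (\<Sum>j\<in>J. sc (c j) (a j))"
  using assms
proof (induction es arbitrary: J a)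
  case Nil
  then obtain j where "j \<in> J" by fastforce
  thus ?case by (intro exI[of _ "\<lambda>_. 1"]) (auto simp: orth_to_def)
next
  case (Cons e es)
  show ?case
  proof (cases "\<forall>j\<in>J. ip (a j) e = 0")
    case True
    obtain c where c: "\<exists>j\<in>J. c j \<noteq> 0" "orth_to es (\<Sum>j\<in>J. sc (c j) (a j))"
      using Cons.IH[of J a] Cons.prems by auto
    have "ip (\<Sum>j\<in>J. sc (c j) (a j)) e = 0"
      using True by (simp add: ip_sum_left ip_sc_left)
    thus ?thesis using c by (auto simp: orth_to_def)
  next
    case False
    then obtain j0 where j0: "j0 \<in> J" "ip (a j0) e \<noteq> 0" by blast
    define b where "b j = ip (a j) e / ip (a j0) e" for j
    have "length es < card (J - {j0})" using Cons.prems j0 by simp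
    from Cons.IH[OF finite_Diff[OF Cons.prems(1)] this, of "\<lambda>j. a j - sc (b j) (a j0)"]
    obtain c where c: "\<exists>j\<in>J - {j0}. c j \<noteq> 0"
        "orth_to es (\<Sum>j\<in>J - {j0}. sc (c j) (a j - sc (b j) (a j0)))"
      by blast
    have "ip (a j - sc (b j) (a j0)) e = 0" for j
      using j0 by (simp add: b_def ip_diff_left ip_sc_left)
    hence "ip (\<Sum>j\<in>J - {j0}. sc (c j) (a j - sc (b j) (a j0))) e = 0"
      by (simp add: ip_sum_left ip_sc_left)
    thus ?thesis
      using c sum_sc_eliminate[OF Cons.prems(1) j0(1), of c a b]
      by (intro exI[of _ "\<lambda>j. if j = j0 then - (\<Sum>i\<in>J - {j0}. c i * b i) else c j"])
        (auto simp: orth_to_def)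
  qed
qed

lemma exists_lincomb_orth_to:
  assumes "orthonormal as" "length as > length es"
  shows "\<exists>c. lincomb c as \<noteq> 0 \<and> orth_to es (lincomb c as)"
proof -
  obtain c where "\<exists>j<length as. c j \<noteq> 0" "orth_to es (lincomb c as)"
    using exists_combination_orth_to[of "{..<length as}" es "\<lambda>j. as!j"] assms
    by (auto simp: lincomb_def)
  thus ?thesis using lincomb_eq_0_iff[OF assms(1)] by blast
qed

lemma length_le_if_forms_close:
  assumes as: "orthonormal as"
    and lower: "\<And>c. a * (norm (lincomb c as))\<^sup>2 \<le> P (lincomb c as)"
    and upper: "\<And>y. orth_to es y \<Longrightarrow> Q y \<le> b * (norm y)\<^sup>2"
    and close: "\<And>y. y \<noteq> 0 \<Longrightarrow> \<bar>P y - Q y\<bar> < (a - b) * (norm y)\<^sup>2"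
  shows "length as \<le> length es"
proof (rule ccontr)
  assume "\<not> length as \<le> length es"
  then obtain c where "lincomb c as \<noteq> 0" "orth_to es (lincomb c as)"
    using exists_lincomb_orth_to[OF as, of es] by auto
  thus False using lower[of c] upper close by (fastforce simp: algebra_simps)
qed

lemma tendsto_lincomb:
  "(\<And>j. j < length es \<Longrightarrow> ((\<lambda>t. c t j) \<longlongrightarrow> a j) F) \<Longrightarrow>
     ((\<lambda>t. lincomb (c t) es) \<longlongrightarrow> lincomb a es) F"
  unfolding lincomb_def by (intro tendsto_sum tendsto_sc_left) auto

lemma tendsto_proj: "(f \<longlongrightarrow> y) F \<Longrightarrow> ((\<lambda>t. proj es (f t)) \<longlongrightarrow> proj es y) F"
  unfolding proj_def by (intro tendsto_lincomb tendsto_ip tendsto_const)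

lemma orthonormal_dist_ge:
  assumes "orthonormal es" "i < length es" "j < length es" "i \<noteq> j"
  shows "1 \<le> dist (es!i) (es!j)"
proof -
  have "ip (es!i) (es!i) = 1" "ip (es!j) (es!j) = 1" "ip (es!i) (es!j) = 0"
    using assms unfolding orthonormal_def by auto
  hence "(norm (es!i))\<^sup>2 = 1" "(norm (es!j))\<^sup>2 = 1" "Re (ip (es!i) (es!j)) = 0"
    by (metis Re_ip_self one_complex.sel(1), metis Re_ip_self one_complex.sel(1), simp)
  hence "(norm (es!i - es!j))\<^sup>2 = 2" by (simp add: norm_diff_sq)
  hence "1 \<le> norm (es!i - es!j)" using power2_le_imp_le[of 1 "norm (es!i - es!j)"] by simp
  thus ?thesis by (simp add: dist_norm)
qed

text \<open>An orthonormal list is \<open>1\<close>-separated, so in a totally bounded set its length is at most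
the size of a \<open>1/2\<close>-net.\<close>

lemma orthonormal_length_bounded:
  assumes "Met_TC.mtotally_bounded S"
  shows "\<exists>M. \<forall>es. orthonormal es \<and> set es \<subseteq> S \<longrightarrow> length es \<le> M"
proof -
  obtain K where K: "finite K" "S \<subseteq> (\<Union>x\<in>K. ball x (1/2))"
    using assms unfolding Met_TC.mtotally_bounded_def
    by (metis mball_eq_ball half_gt_zero zero_less_one)
  have "length es \<le> card K" if es: "orthonormal es" "set es \<subseteq> S" for es
  proof -
    define f where "f j = (SOME x. x \<in> K \<and> es!j \<in> ball x (1/2))" for j
    have f: "f j \<in> K \<and> es!j \<in> ball (f j) (1/2)" if "j < length es" for j
      unfolding f_def by (rule someI_ex) (use K(2) es(2) that nth_mem in blast)
    have "inj_on f {..<length es}"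
    proof (rule inj_onI, rule ccontr)
      fix i j assume ij: "i \<in> {..<length es}" "j \<in> {..<length es}" "f i = f j" "i \<noteq> j"
      have "dist (es!i) (es!j) \<le> dist (es!i) (f i) + dist (f i) (es!j)" by (rule dist_triangle)
      also have "\<dots> < 1" using f[of i] f[of j] ij by (simp add: dist_commute)
      finally show False using orthonormal_dist_ge[OF es(1)] ij by fastforce
    qed
    hence "card {..<length es} \<le> card K" using f K(1) by (intro card_inj_on_le) auto
    thus ?thesis by simp
  qed
  thus ?thesis by blast
qed

section \<open>Nearest points in closed subspaces\<close>

lemma nearest_point_orthogonal:
  assumes M: "V.subspace M" "m \<in> M" and nearest: "\<And>v. v \<in> M \<Longrightarrow> dist y m \<le> dist y v"
    and v: "v \<in> M"
  shows "ip (y - m) v = 0"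
proof -
  have Re0: "Re (ip (y - m) w) = 0" if w: "w \<in> M" for w
  proof -
    have "0 \<le> (- 2 * Re (ip (y - m) w)) * t + (norm w)\<^sup>2 * t\<^sup>2" for t
    proof -
      have "m + t *\<^sub>R w \<in> M" using M w by (metis V.subspace_add V.subspace_scale sc_of_real)
      hence "norm (y - m) \<le> norm ((y - m) - t *\<^sub>R w)"
        using nearest by (simp add: dist_norm diff_diff_eq)
      hence "(norm (y - m))\<^sup>2 \<le> (norm ((y - m) - t *\<^sub>R w))\<^sup>2" by (intro power_mono) auto
      also have "\<dots> = (norm (y - m))\<^sup>2 - 2 * (t * Re (ip (y - m) w)) + t\<^sup>2 * (norm w)\<^sup>2"
        by (subst norm_diff_sq) (simp add: ip_scaleR_right power_mult_distrib)
      finally show ?thesis by (simp add: algebra_simps)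
    qed
    from linear_nonneg_imp_zero[OF this] show ?thesis by simp
  qed
  have "Im (ip (y - m) v) = 0"
    using Re0[of "sc \<i> v"] M v by (simp add: ip_sc_right V.subspace_scale)
  thus ?thesis using Re0[OF v] by (simp add: complex_eq_iff)
qed

lemma near_minimizers_close:
  assumes sub: "V.subspace M" and m: "m1 \<in> M" "m2 \<in> M"
    and d: "0 \<le> d" "\<And>v. v \<in> M \<Longrightarrow> d \<le> dist y v"
    and r: "dist y m1 \<le> r1" "dist y m2 \<le> r2"
  shows "(norm (m1 - m2))\<^sup>2 \<le> 2 * (r1\<^sup>2 - d\<^sup>2) + 2 * (r2\<^sup>2 - d\<^sup>2)"
proof -
  have "(1/2::real) *\<^sub>R (m1 + m2) \<in> M"
    using sub m by (metis V.subspace_add V.subspace_scale sc_of_real)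
  moreover have "(y - m1) + (y - m2) = 2 *\<^sub>R (y - (1/2::real) *\<^sub>R (m1 + m2))"
    by (simp add: algebra_simps scaleR_2)
  ultimately have "2 * d \<le> norm ((y - m1) + (y - m2))"
    using d(2) by (simp add: dist_norm)
  hence "(2 * d)\<^sup>2 \<le> (norm ((y - m1) + (y - m2)))\<^sup>2" using d(1) by (intro power_mono) auto
  hence "4 * d\<^sup>2 \<le> (norm ((y - m1) + (y - m2)))\<^sup>2" by (simp add: power_mult_distrib)
  moreover have "(norm (y - m1))\<^sup>2 \<le> r1\<^sup>2" "(norm (y - m2))\<^sup>2 \<le> r2\<^sup>2"
    using r by (auto simp: dist_norm intro!: power_mono)
  moreover have "(norm ((y - m1) - (y - m2)))\<^sup>2 = (norm (m1 - m2))\<^sup>2"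
    by (simp add: norm_minus_commute)
  ultimately show ?thesis using parallelogram_law[of "y - m1" "y - m2"] by (smt (verit))
qed

lemma closed_subspace_nearest_point:
  assumes sub: "V.subspace M" and cl: "closed M"
  shows "\<exists>m\<in>M. \<forall>v\<in>M. dist y m \<le> dist y v"
proof -
  define d where "d = (INF m\<in>M. dist y m)"
  have ne: "M \<noteq> {}" using sub V.subspace_0 by blast
  have bdd: "bdd_below (dist y ` M)" by (auto intro!: bdd_belowI[of _ 0])
  have dle: "d \<le> dist y m" if "m \<in> M" for m unfolding d_def using bdd that by (rule cINF_lower)
  have d0: "0 \<le> d" unfolding d_def using ne by (intro cINF_greatest) auto
  have "\<exists>m\<in>M. dist y m < d + 1 / Suc n" for n
    using cINF_less_iff[OF ne bdd, of "d + 1 / Suc n"] by (simp add: d_def)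
  then obtain m where m: "\<And>n. m n \<in> M" "\<And>n. dist y (m n) < d + 1 / Suc n" by metis
  define \<epsilon> :: "nat \<Rightarrow> real" where "\<epsilon> n = 2 * ((d + 1 / Suc n)\<^sup>2 - d\<^sup>2)" for n
  have par: "(norm (m i - m j))\<^sup>2 \<le> \<epsilon> i + \<epsilon> j" for i j
    unfolding \<epsilon>_def using m less_imp_le
    by (intro near_minimizers_close[OF sub _ _ d0 dle]) auto
  have "\<epsilon> \<longlonglongrightarrow> 2 * ((d + 0)\<^sup>2 - d\<^sup>2)"
    unfolding \<epsilon>_def by (intro tendsto_intros LIMSEQ_Suc[OF lim_inverse_n'])
  have "Cauchy m"
  proof (rule metric_CauchyI)
    fix e :: real assume e: "e > 0"
    obtain N where N: "\<And>n. n \<ge> N \<Longrightarrow> \<epsilon> n < e\<^sup>2 / 2"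
      using order_tendstoD(2)[OF \<open>\<epsilon> \<longlonglongrightarrow> _\<close>, of "e\<^sup>2 / 2"] e
      by (auto simp: eventually_sequentially)
    have "dist (m i) (m j) < e" if "N \<le> i" "N \<le> j" for i j
    proof -
      have "(norm (m i - m j))\<^sup>2 < e\<^sup>2" using par[of i j] N[OF that(1)] N[OF that(2)] by simp
      thus ?thesis using e by (simp add: dist_norm power_less_imp_less_base)
    qed
    thus "\<exists>N. \<forall>i\<ge>N. \<forall>j\<ge>N. dist (m i) (m j) < e" by blast
  qed
  then obtain m0 where m0: "m \<longlonglongrightarrow> m0" using Cauchy_convergent_iff convergent_def by blast
  have "m0 \<in> M" using cl m0 m(1) closed_sequentially by blast
  moreover have "dist y m0 \<le> d"
  proof (rule tendsto_le[OF sequentially_bot])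
    show "(\<lambda>n. d + 1 / Suc n) \<longlonglongrightarrow> d"
      using tendsto_add[OF tendsto_const LIMSEQ_Suc[OF lim_inverse_n'], of d] by simp
    show "(\<lambda>n. dist y (m n)) \<longlonglongrightarrow> dist y m0" using m0 by (intro tendsto_intros)
  qed (use m(2) in \<open>auto intro!: always_eventually less_imp_le\<close>)
  ultimately show ?thesis using dle by force
qed

end

section \<open>Semibounded self-adjoint operators with compact resolvent\<close>

locale sa_operator = hilbert_space sc ip for sc :: "complex \<Rightarrow> 'h::banach \<Rightarrow> 'h" and ip +
  fixes D :: "'h set" and T :: "'h \<Rightarrow> 'h" and mu :: real
  assumes self_adj: "self_adjoint sc ip D T"
    and compact_res: "compact_resolvent sc D T"
    and lower_bound: "\<And>x. x \<in> D \<Longrightarrow> 0 \<le> Re (ip (T x - sc (complex_of_real mu) x) x)"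
begin

lemma D_subspace: "V.subspace D"
  and T_add: "x \<in> D \<Longrightarrow> y \<in> D \<Longrightarrow> T (x + y) = T x + T y"
  and T_sc: "x \<in> D \<Longrightarrow> T (sc c x) = sc c (T x)"
  and T_sym: "x \<in> D \<Longrightarrow> y \<in> D \<Longrightarrow> ip (T x) y = ip x (T y)"
  and T_adjoint: "(\<And>x. x \<in> D \<Longrightarrow> ip (T x) y = ip x z) \<Longrightarrow> y \<in> D \<and> T y = z"
  using self_adj unfolding self_adjoint_def linear_on_def by blast+

lemma D_0 [simp]: "0 \<in> D"
  and D_add: "x \<in> D \<Longrightarrow> y \<in> D \<Longrightarrow> x + y \<in> D"
  and D_sc: "x \<in> D \<Longrightarrow> sc c x \<in> D"
  and D_diff: "x \<in> D \<Longrightarrow> y \<in> D \<Longrightarrow> x - y \<in> D"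
  using D_subspace V.subspace_0 V.subspace_add V.subspace_scale V.subspace_diff by blast+

lemma D_scaleR: "x \<in> D \<Longrightarrow> r *\<^sub>R x \<in> D"
  using D_sc[of x "complex_of_real r"] by (simp add: sc_of_real)

lemma T_0 [simp]: "T 0 = 0"
  using T_add[of 0 0] by simp

lemma T_diff: "x \<in> D \<Longrightarrow> y \<in> D \<Longrightarrow> T (x - y) = T x - T y"
  using T_sc[of y "- 1"] T_add[of x "sc (- 1) y"] D_sc[of y "- 1"]
  by (simp add: V.scale_minus_left)

lemma T_scaleR: "x \<in> D \<Longrightarrow> T (r *\<^sub>R x) = r *\<^sub>R T x"
  using T_sc[of x "complex_of_real r"] by (simp add: sc_of_real)

lemma T_sum: "(\<And>a. a \<in> S \<Longrightarrow> f a \<in> D) \<Longrightarrow> T (sum f S) = (\<Sum>a\<in>S. T (f a))"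
proof (induction S rule: infinite_finite_induct)
  case (insert x F)
  have "sum f F \<in> D" using insert by (intro V.subspace_sum[OF D_subspace]) auto
  thus ?case using insert by (simp add: T_add)
qed auto

lemma T_closed:
  assumes "\<And>n. x n \<in> D" "x \<longlonglongrightarrow> a" "(\<lambda>n. T (x n)) \<longlonglongrightarrow> b"
  shows "a \<in> D \<and> T a = b"
proof (rule T_adjoint)
  fix v assume v: "v \<in> D"
  have "(\<lambda>n. ip (T v) (x n)) \<longlonglongrightarrow> ip (T v) a" "(\<lambda>n. ip v (T (x n))) \<longlonglongrightarrow> ip v b"
    using assms by (auto intro!: tendsto_intros)
  thus "ip (T v) a = ip v b" using T_sym[OF v assms(1)] LIMSEQ_unique by force
qed

definition qform :: "'h \<Rightarrow> real" where
  "qform x = Re (ip (T x) x)"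

lemma ip_T_self: "x \<in> D \<Longrightarrow> ip (T x) x = complex_of_real (qform x)"
proof -
  assume x: "x \<in> D"
  have "ip (T x) x = cnj (ip (T x) x)" using T_sym[OF x x] ip_cnj[of x "T x"] by simp
  hence "Im (ip (T x) x) = 0" by (metis cnj.sel(2) neg_equal_zero)
  thus ?thesis by (simp add: qform_def complex_eq_iff)
qed

lemma qform_lower_bound: "x \<in> D \<Longrightarrow> mu * (norm x)\<^sup>2 \<le> qform x"
  using lower_bound[of x] by (simp add: qform_def ip_diff_left ip_sc_left Re_ip_self)

lemma qform_scaleR: "x \<in> D \<Longrightarrow> qform (r *\<^sub>R x) = r\<^sup>2 * qform x"
  by (simp add: qform_def T_scaleR ip_scaleR_left ip_scaleR_right power2_eq_square)

lemma norm_T_minus_i_sq: "x \<in> D \<Longrightarrow> (norm (T x - sc \<i> x))\<^sup>2 = (norm (T x))\<^sup>2 + (norm x)\<^sup>2"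
  using ip_T_self[of x] by (simp add: norm_diff_sq norm_sc ip_sc_right)

lemma norm_le_norm_T_minus_i: "x \<in> D \<Longrightarrow> norm x \<le> norm (T x - sc \<i> x)"
proof -
  assume "x \<in> D"
  hence "(norm x)\<^sup>2 \<le> (norm (T x - sc \<i> x))\<^sup>2" using norm_T_minus_i_sq by simp
  thus ?thesis by (rule power2_le_imp_le) simp
qed

lemma T_minus_i_diff:
  "x \<in> D \<Longrightarrow> y \<in> D \<Longrightarrow> (T x - sc \<i> x) - (T y - sc \<i> y) = T (x - y) - sc \<i> (x - y)"
  by (simp add: T_diff V.scale_right_diff_distrib)

lemma T_minus_i_inj: "x \<in> D \<Longrightarrow> y \<in> D \<Longrightarrow> T x - sc \<i> x = T y - sc \<i> y \<Longrightarrow> x = y"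
  using norm_le_norm_T_minus_i[OF D_diff[of x y]] T_minus_i_diff[of x y] by simp

lemma range_T_minus_i_subspace: "V.subspace ((\<lambda>x. T x - sc \<i> x) ` D)"
  unfolding V.subspace_def
proof (intro conjI ballI allI)
  show "0 \<in> (\<lambda>x. T x - sc \<i> x) ` D" by (rule image_eqI[of _ _ 0]) auto
next
  fix u v assume "u \<in> (\<lambda>x. T x - sc \<i> x) ` D" "v \<in> (\<lambda>x. T x - sc \<i> x) ` D"
  then obtain a b where "a \<in> D" "b \<in> D" "u = T a - sc \<i> a" "v = T b - sc \<i> b" by blast
  thus "u + v \<in> (\<lambda>x. T x - sc \<i> x) ` D"
    by (intro image_eqI[of _ _ "a + b"]) (auto simp: T_add D_add V.scale_right_distrib)
next
  fix c u assume "u \<in> (\<lambda>x. T x - sc \<i> x) ` D"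
  then obtain a where "a \<in> D" "u = T a - sc \<i> a" by blast
  thus "sc c u \<in> (\<lambda>x. T x - sc \<i> x) ` D"
    by (intro image_eqI[of _ _ "sc c a"]) (auto simp: T_sc D_sc V.scale_right_diff_distrib mult.commute)
qed

text \<open>\<open>T - \<i>\<close> is bounded below by \<open>norm_le_norm_T_minus_i\<close> and \<open>T\<close> is closed, so its range is closed.\<close>

lemma range_T_minus_i_closed: "closed ((\<lambda>x. T x - sc \<i> x) ` D)"
  unfolding closed_sequential_limits
proof (intro allI impI, elim conjE)
  fix y l assume y: "\<forall>n. y n \<in> (\<lambda>x. T x - sc \<i> x) ` D" and l: "y \<longlonglongrightarrow> l"
  define x where "x n = (SOME x. x \<in> D \<and> y n = T x - sc \<i> x)" for n
  have "x n \<in> D \<and> y n = T (x n) - sc \<i> (x n)" for n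
    unfolding x_def by (rule someI_ex) (use y in blast)
  hence x: "\<And>n. x n \<in> D" "\<And>n. y n = T (x n) - sc \<i> (x n)" by auto
  have "Cauchy x"
  proof (rule metric_CauchyI)
    fix e :: real assume "e > 0"
    then obtain N where N: "\<And>m n. m \<ge> N \<Longrightarrow> n \<ge> N \<Longrightarrow> dist (y m) (y n) < e"
      using LIMSEQ_imp_Cauchy[OF l] unfolding Cauchy_def by blast
    have "dist (x m) (x n) \<le> dist (y m) (y n)" for m n
      using norm_le_norm_T_minus_i[OF D_diff[OF x(1) x(1)]] T_minus_i_diff[OF x(1) x(1)]
      by (simp add: dist_norm x(2))
    hence "dist (x m) (x n) < e" if "m \<ge> N" "n \<ge> N" for m n
      using N[OF that] by (rule le_less_trans)
    thus "\<exists>N. \<forall>m\<ge>N. \<forall>n\<ge>N. dist (x m) (x n) < e" by blast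
  qed
  then obtain a where a: "x \<longlonglongrightarrow> a" using Cauchy_convergent_iff convergent_def by blast
  have "(\<lambda>n. y n + sc \<i> (x n)) \<longlonglongrightarrow> l + sc \<i> a" using l a by (intro tendsto_intros)
  hence "a \<in> D \<and> T a = l + sc \<i> a" using T_closed[OF x(1) a] by (simp add: x(2))
  thus "l \<in> (\<lambda>x. T x - sc \<i> x) ` D" by (intro image_eqI[of _ _ a]) auto
qed

text \<open>A vector orthogonal to the range of \<open>T - \<i>\<close> is an eigenvector of \<open>T\<close> for \<open>-\<i>\<close>,
which is impossible for a symmetric operator unless it is \<open>0\<close>.\<close>

lemma T_minus_i_surj: "\<exists>x\<in>D. T x - sc \<i> x = y"
proof -
  let ?Ran = "(\<lambda>x. T x - sc \<i> x) ` D"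
  obtain m where m: "m \<in> ?Ran" "\<And>v. v \<in> ?Ran \<Longrightarrow> dist y m \<le> dist y v"
    using closed_subspace_nearest_point[OF range_T_minus_i_subspace range_T_minus_i_closed] by blast
  define w where "w = y - m"
  have "w \<in> D \<and> T w = sc (- \<i>) w"
  proof (rule T_adjoint)
    fix x assume "x \<in> D"
    hence "ip w (T x - sc \<i> x) = 0"
      unfolding w_def using m by (intro nearest_point_orthogonal[OF range_T_minus_i_subspace]) auto
    hence "ip (T x - sc \<i> x) w = 0" by (simp add: ip_eq_0_commute)
    thus "ip (T x) w = ip x (sc (- \<i>) w)" by (simp add: ip_diff_left ip_sc_left ip_sc_right ip_minus_right)
  qed
  hence "ip (T w) w = - \<i> * complex_of_real ((norm w)\<^sup>2)" and "w \<in> D"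
    by (simp_all add: ip_sc_left ip_self ip_minus_left)
  hence "norm w = 0" using ip_T_self[of w] by (simp add: complex_eq_iff)
  thus ?thesis using m(1) by (auto simp: w_def)
qed

definition Ri :: "'h \<Rightarrow> 'h" where
  "Ri = resolvent sc D T \<i>"

lemma Ri_mem: "Ri y \<in> D" and Ri_eq: "T (Ri y) - sc \<i> (Ri y) = y"
proof -
  have "\<exists>!x. x \<in> D \<and> T x - sc \<i> x = y" using T_minus_i_surj[of y] T_minus_i_inj by blast
  from theI'[OF this] show "Ri y \<in> D" "T (Ri y) - sc \<i> (Ri y) = y"
    unfolding Ri_def resolvent_def by auto
qed

lemma Ri_apply: "x \<in> D \<Longrightarrow> Ri (T x - sc \<i> x) = x"
  using T_minus_i_inj[OF Ri_mem] Ri_eq by blast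

lemma Ri_norm_le: "norm (Ri y) \<le> norm y"
  using norm_le_norm_T_minus_i[OF Ri_mem[of y]] by (simp add: Ri_eq)

lemma Ri_add: "Ri (x + y) = Ri x + Ri y"
proof -
  have "T (Ri x + Ri y) - sc \<i> (Ri x + Ri y) = x + y"
    using Ri_eq[of x] Ri_eq[of y] by (simp add: T_add Ri_mem V.scale_right_distrib algebra_simps)
  hence "Ri (x + y) = Ri (T (Ri x + Ri y) - sc \<i> (Ri x + Ri y))" by simp
  thus ?thesis using Ri_apply[OF D_add[OF Ri_mem Ri_mem]] by simp
qed

lemma Ri_sc: "Ri (sc c x) = sc c (Ri x)"
proof -
  have "T (sc c (Ri x)) - sc \<i> (sc c (Ri x)) = sc c (T (Ri x) - sc \<i> (Ri x))"
    by (simp add: T_sc Ri_mem V.scale_right_diff_distrib mult.commute)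
  hence "T (sc c (Ri x)) - sc \<i> (sc c (Ri x)) = sc c x" by (simp only: Ri_eq)
  hence "Ri (sc c x) = Ri (T (sc c (Ri x)) - sc \<i> (sc c (Ri x)))" by simp
  thus ?thesis using Ri_apply[OF D_sc[OF Ri_mem]] by simp
qed

lemma bounded_linear_Ri: "bounded_linear Ri"
proof (rule bounded_linear_intro[of _ 1])
  show "Ri (r *\<^sub>R x) = r *\<^sub>R Ri x" for r x using Ri_sc[of "complex_of_real r" x] by (simp add: sc_of_real)
qed (simp_all add: Ri_add Ri_norm_le)

lemma Ri_sum: "Ri (sum f S) = (\<Sum>a\<in>S. Ri (f a))"
  using linear_sum[OF bounded_linear.linear[OF bounded_linear_Ri]] .

definition eigvec :: "real \<Rightarrow> 'h \<Rightarrow> bool" where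
  "eigvec m v \<longleftrightarrow> v \<in> D \<and> T v = sc (complex_of_real m) v"

definition eigenspace :: "real \<Rightarrow> 'h set" where
  "eigenspace m = {v. eigvec m v}"

lemma eigenspace_subspace: "V.subspace (eigenspace m)"
  unfolding V.subspace_def eigenspace_def eigvec_def
  by (auto simp: D_add D_sc T_add T_sc V.scale_right_distrib mult.commute)

lemma eig_mult_eq_dim: "eig_mult sc D T m = V.dim (eigenspace m)"
  unfolding eig_mult_def eigenspace_def eigvec_def by simp

lemma is_eigenvalue_iff: "is_eigenvalue sc D T m \<longleftrightarrow> (\<exists>v. v \<noteq> 0 \<and> eigvec m v)"
  unfolding is_eigenvalue_def eigvec_def by blast

lemma qform_eigvec: "eigvec m e \<Longrightarrow> qform e = m * (norm e)\<^sup>2"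
  by (simp add: eigvec_def qform_def ip_sc_left ip_self)

lemma eigvec_orthogonal:
  assumes "eigvec m v" "eigvec m' w" "m \<noteq> m'"
  shows "ip v w = 0"
proof -
  have "complex_of_real m * ip v w = ip v (T w)"
    using assms T_sym[of v w] by (simp add: eigvec_def ip_sc_left)
  also have "\<dots> = complex_of_real m' * ip v w" using assms by (simp add: eigvec_def ip_sc_right)
  finally show ?thesis using assms(3) by simp
qed

lemma Ri_eigvec: "eigvec m e \<Longrightarrow> Ri e = sc (1 / (complex_of_real m - \<i>)) e"
proof -
  assume e: "eigvec m e"
  define k where "k = 1 / (complex_of_real m - \<i>)"
  have "T (sc k e) - sc \<i> (sc k e) = sc (k * complex_of_real m) e - sc (\<i> * k) e"
    using e by (simp add: eigvec_def T_sc)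
  also have "\<dots> = sc (k * (complex_of_real m - \<i>)) e"
    by (simp only: right_diff_distrib V.scale_left_diff_distrib mult.commute)
  also have "k * (complex_of_real m - \<i>) = 1" by (simp add: k_def complex_eq_iff)
  finally have "T (sc k e) - sc \<i> (sc k e) = e" by simp
  hence "Ri e = Ri (T (sc k e) - sc \<i> (sc k e))" by simp
  also have "\<dots> = sc k e" using Ri_apply[OF D_sc[of e k]] e by (simp add: eigvec_def)
  finally show ?thesis by (simp only: k_def)
qed

definition sform :: "real \<Rightarrow> 'h \<Rightarrow> 'h \<Rightarrow> real" where
  "sform c x y = Re (ip (T x - sc (complex_of_real c) x) y)"

lemma sform_commute: "x \<in> D \<Longrightarrow> y \<in> D \<Longrightarrow> sform c x y = sform c y x"
  using T_sym[of y x] Re_ip_commute[of "T x" y] Re_ip_commute[of x y]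
  by (simp add: sform_def ip_diff_left ip_sc_left)

lemma sform_self: "sform c x x = qform x - c * (norm x)\<^sup>2"
  by (simp add: sform_def qform_def ip_diff_left ip_sc_left Re_ip_self)

lemma sform_nonneg: "x \<in> D \<Longrightarrow> 0 \<le> sform mu x x"
  using lower_bound by (simp add: sform_def)

lemma sform_expand:
  assumes "x \<in> D" "y \<in> D"
  shows "sform c (x + t *\<^sub>R y) (x + t *\<^sub>R y) = sform c x x + 2 * sform c x y * t + sform c y y * t\<^sup>2"
proof -
  have "T (x + t *\<^sub>R y) - sc (complex_of_real c) (x + t *\<^sub>R y) =
      (T x - sc (complex_of_real c) x) + t *\<^sub>R (T y - sc (complex_of_real c) y)"
    using assms by (simp add: T_add T_scaleR D_scaleR V.scale_right_distrib scaleR_diff_right sc_scaleR)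
  hence "sform c (x + t *\<^sub>R y) (x + t *\<^sub>R y) =
      Re (ip ((T x - sc (complex_of_real c) x) + t *\<^sub>R (T y - sc (complex_of_real c) y)) (x + t *\<^sub>R y))"
    by (simp only: sform_def)
  also have "\<dots> = sform c x x + t * sform c x y + t * sform c y x + t * t * sform c y y"
    unfolding sform_def
    by (simp only: ip_add_left ip_add_right ip_scaleR_left ip_scaleR_right) (simp add: algebra_simps)
  finally show ?thesis using sform_commute[OF assms] by (simp add: power2_eq_square algebra_simps)
qed

lemma sform_Cauchy_Schwarz:
  assumes "x \<in> D" "y \<in> D"
  shows "sform mu x y \<le> sqrt (sform mu x x * sform mu y y)"
proof -
  have "(sform mu x y)\<^sup>2 \<le> sform mu x x * sform mu y y"
  proof (rule quadratic_nonneg_discrim_le)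
    show "0 \<le> sform mu x x + 2 * sform mu x y * t + sform mu y y * t\<^sup>2" for t
      using sform_nonneg[of "x + t *\<^sub>R y"] assms by (simp add: sform_expand D_add D_scaleR)
  qed (use assms sform_nonneg in auto)
  thus ?thesis by (rule real_le_rsqrt)
qed

lemma sform_diff_le:
  assumes "x \<in> D" "y \<in> D"
  shows "sform mu (x - y) (x - y) \<le> 2 * sform mu x x + 2 * sform mu y y"
  using sform_expand[OF assms, of mu "- 1"] sform_expand[OF assms, of mu 1]
    sform_nonneg[of "x + y"] assms by (simp add: D_add)

definition zc :: complex where
  "zc = (SOME z. in_resolvent_set sc D T z \<and> compact_operator (resolvent sc D T z))"

definition Rc :: "'h \<Rightarrow> 'h" where
  "Rc = resolvent sc D T zc"

lemma zc_spec: "in_resolvent_set sc D T zc \<and> compact_operator Rc"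
  unfolding zc_def Rc_def using compact_res unfolding compact_resolvent_def by (rule someI_ex)

lemma Rc_mem: "Rc y \<in> D" and Rc_eq: "T (Rc y) - sc zc (Rc y) = y"
  using theI'[of "\<lambda>x. x \<in> D \<and> T x - sc zc x = y"] zc_spec
  unfolding Rc_def resolvent_def in_resolvent_set_def by auto

lemma Rc_diff: "Rc (a - b) = Rc a - Rc b"
proof -
  have "T (Rc a - Rc b) - sc zc (Rc a - Rc b) = a - b"
    using Rc_eq[of a] Rc_eq[of b] by (simp add: T_diff Rc_mem V.scale_right_diff_distrib algebra_simps)
  thus ?thesis using zc_spec D_diff[OF Rc_mem Rc_mem] Rc_mem Rc_eq
    unfolding in_resolvent_set_def by metis
qed

definition energy_ball :: "real \<Rightarrow> 'h set" where
  "energy_ball C = {w\<in>D. norm w \<le> 1 \<and> qform w \<le> C}"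

lemma sform_le_if_energy_le:
  assumes "norm w \<le> 1" "qform w \<le> C"
  shows "sform mu w w \<le> C + \<bar>mu\<bar>"
proof -
  have "(norm w)\<^sup>2 \<le> 1" using assms by (simp add: power_le_one)
  hence "- mu * (norm w)\<^sup>2 \<le> \<bar>mu\<bar> * 1"
    by (intro order.trans[OF _ mult_left_mono[of "(norm w)\<^sup>2" 1 "\<bar>mu\<bar>"]]) (auto simp: abs_if)
  thus ?thesis using assms by (simp add: sform_self)
qed

text \<open>With \<open>u = Rc (wi - wj)\<close>, the vector \<open>wi - wj = (T - mu) u + (mu - zc) u\<close> is controlled through the
Cauchy--Schwarz inequality for the nonnegative form \<open>sform mu\<close> by \<open>norm u\<close> and the energies of \<open>wi\<close>, \<open>wj\<close>.\<close>

lemma energy_ball_norm_diff_le: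
  assumes "wi \<in> energy_ball C" "wj \<in> energy_ball C"
  defines "k \<equiv> cmod (zc - complex_of_real mu)" and "t \<equiv> norm (Rc wi - Rc wj)"
  shows "(norm (wi - wj))\<^sup>2 \<le> sqrt ((2 * t + k * t\<^sup>2) * (4 * (C + \<bar>mu\<bar>))) + 2 * k * t"
proof -
  have wi: "wi \<in> D" "norm wi \<le> 1" "qform wi \<le> C" and wj: "wj \<in> D" "norm wj \<le> 1" "qform wj \<le> C"
    using assms by (simp_all add: energy_ball_def)
  define d where "d = wi - wj"
  define u where "u = Rc d"
  have dD: "d \<in> D" and uD: "u \<in> D" using wi wj by (simp_all add: d_def u_def D_diff Rc_mem)
  have t: "t = norm u" by (simp add: t_def u_def d_def Rc_diff)
  have k: "0 \<le> k" by (simp add: k_def)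
  have nd: "norm d \<le> 2" using wi wj norm_triangle_ineq4[of wi wj] by (simp add: d_def)
  have du: "d = (T u - sc (complex_of_real mu) u) + sc (complex_of_real mu - zc) u"
    using Rc_eq[of d] by (simp add: u_def V.scale_left_diff_distrib)
  have "(norm d)\<^sup>2 = Re (ip d d)" by (simp add: Re_ip_self)
  also have "\<dots> = sform mu u d + Re ((complex_of_real mu - zc) * ip u d)"
    by (subst (1) du) (simp add: sform_def ip_add_left ip_sc_left)
  also have "Re ((complex_of_real mu - zc) * ip u d) \<le> 2 * k * norm u"
  proof -
    have "Re ((complex_of_real mu - zc) * ip u d) \<le> cmod ((complex_of_real mu - zc) * ip u d)"
      by (rule complex_Re_le_cmod)
    also have "\<dots> = k * cmod (ip u d)" by (simp add: k_def norm_mult norm_minus_commute)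
    also have "\<dots> \<le> k * (norm u * norm d)" using k by (intro mult_left_mono cmod_ip_le)
    also have "\<dots> \<le> k * (norm u * 2)" using k nd by (intro mult_left_mono) auto
    finally show ?thesis by simp
  qed
  finally have A: "(norm d)\<^sup>2 \<le> sform mu u d + 2 * k * norm u" by simp
  have B: "sform mu u u \<le> 2 * norm u + k * (norm u)\<^sup>2"
  proof -
    have "T u - sc (complex_of_real mu) u = d + sc (zc - complex_of_real mu) u"
      by (simp add: du V.scale_left_diff_distrib)
    hence "sform mu u u = Re (ip d u) + Re ((zc - complex_of_real mu) * ip u u)"
      by (simp add: sform_def ip_add_left ip_sc_left)
    also have "Re ((zc - complex_of_real mu) * ip u u) = Re (zc - complex_of_real mu) * (norm u)\<^sup>2"
      by (simp add: ip_self)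
    also have "\<dots> \<le> k * (norm u)\<^sup>2" unfolding k_def by (intro mult_right_mono complex_Re_le_cmod) auto
    also have "Re (ip d u) \<le> norm d * norm u" by (rule Re_ip_le)
    also have "\<dots> \<le> 2 * norm u" using nd by (intro mult_right_mono) auto
    finally show ?thesis by simp
  qed
  have E: "sform mu d d \<le> 4 * (C + \<bar>mu\<bar>)"
    using sform_diff_le[OF wi(1) wj(1)] sform_le_if_energy_le[OF wi(2,3)] sform_le_if_energy_le[OF wj(2,3)]
    by (simp add: d_def)
  have "sform mu u d \<le> sqrt (sform mu u u * sform mu d d)" by (rule sform_Cauchy_Schwarz[OF uD dD])
  also have "\<dots> \<le> sqrt ((2 * t + k * t\<^sup>2) * (4 * (C + \<bar>mu\<bar>)))"
    unfolding t using B E sform_nonneg[OF uD] sform_nonneg[OF dD]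
    by (intro real_sqrt_le_mono mult_mono) auto
  finally show ?thesis using A t by (simp add: d_def)
qed

lemma energy_ball_Cauchy_subseq:
  fixes w :: "nat \<Rightarrow> 'h"
  assumes w: "\<And>n. w n \<in> energy_ball C"
  shows "\<exists>r. strict_mono r \<and> Cauchy (w \<circ> r)"
proof -
  have "\<forall>n. Rc (w n) \<in> closure (Rc ` cball 0 1)"
    using w closure_subset by (fastforce simp: energy_ball_def)
  moreover have cpt: "compact (closure (Rc ` cball 0 1))" using zc_spec by (simp add: compact_operator_def)
  ultimately obtain l r where r: "strict_mono r" "((\<lambda>n. Rc (w n)) \<circ> r) \<longlonglongrightarrow> l"
    using seq_compactE[OF compact_imp_seq_compact[OF cpt], of "\<lambda>n. Rc (w n)"] by blast
  define k where "k = cmod (zc - complex_of_real mu)"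
  define \<phi> where "\<phi> t = sqrt ((2 * t + k * t\<^sup>2) * (4 * (C + \<bar>mu\<bar>))) + 2 * k * t" for t
  have "continuous (at 0) \<phi>" unfolding \<phi>_def by (intro continuous_intros)
  have "Cauchy (w \<circ> r)"
  proof (rule metric_CauchyI)
    fix e :: real assume e: "e > 0"
    obtain \<eta> where \<eta>: "\<eta> > 0" "\<And>t. dist t 0 < \<eta> \<Longrightarrow> dist (\<phi> t) (\<phi> 0) < e\<^sup>2"
      using \<open>continuous (at 0) \<phi>\<close> e unfolding continuous_at_eps_delta by (meson zero_less_power)
    obtain N where N: "\<And>m n. m \<ge> N \<Longrightarrow> n \<ge> N \<Longrightarrow> dist (Rc (w (r m))) (Rc (w (r n))) < \<eta>"
      using LIMSEQ_imp_Cauchy[OF r(2)] \<eta>(1) unfolding Cauchy_def o_def by blast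
    have "dist (w (r m)) (w (r n)) < e" if "m \<ge> N" "n \<ge> N" for m n
    proof -
      define t0 where "t0 = norm (Rc (w (r m)) - Rc (w (r n)))"
      have "(norm (w (r m) - w (r n)))\<^sup>2 \<le> \<phi> t0"
        unfolding \<phi>_def k_def t0_def by (rule energy_ball_norm_diff_le[OF w w])
      also have "\<phi> t0 < e\<^sup>2"
      proof -
        have "dist t0 0 < \<eta>" using N[OF that] by (simp add: t0_def dist_norm)
        hence "dist (\<phi> t0) (\<phi> 0) < e\<^sup>2" by (rule \<eta>(2))
        thus ?thesis by (simp add: \<phi>_def dist_real_def abs_less_iff)
      qed
      finally show ?thesis using e by (simp add: dist_norm power_less_imp_less_base)
    qed
    thus "\<exists>N. \<forall>m\<ge>N. \<forall>n\<ge>N. dist ((w \<circ> r) m) ((w \<circ> r) n) < e" by auto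
  qed
  thus ?thesis using r(1) by blast
qed

lemma energy_ball_totally_bounded: "Met_TC.mtotally_bounded (energy_ball C)"
  unfolding Met_TC.mtotally_bounded_sequentially
proof (intro conjI allI impI)
  fix w :: "nat \<Rightarrow> 'h" assume "range w \<subseteq> energy_ball C"
  hence "\<And>n. w n \<in> energy_ball C" by blast
  from energy_ball_Cauchy_subseq[OF this] show "\<exists>r. strict_mono r \<and> Met_TC.MCauchy (w \<circ> r)" by simp
qed simp

text \<open>The eigenvalue of a unit eigenvector \<open>e\<close> is recorded as \<open>qform e\<close>.\<close>

definition eig_list :: "real \<Rightarrow> 'h list \<Rightarrow> bool" where
  "eig_list g es \<longleftrightarrow> orthonormal es \<and> (\<forall>e\<in>set es. eigvec (qform e) e \<and> qform e < g)"

definition max_eig_list :: "real \<Rightarrow> 'h list \<Rightarrow> bool" where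
  "max_eig_list g es \<longleftrightarrow> eig_list g es \<and> (\<forall>es'. eig_list g es' \<longrightarrow> length es' \<le> length es)"

lemma eig_list_subset_D: "eig_list g es \<Longrightarrow> set es \<subseteq> D"
  unfolding eig_list_def eigvec_def by auto

lemma eig_list_lower_bound: "eig_list g es \<Longrightarrow> e \<in> set es \<Longrightarrow> mu \<le> qform e"
  using qform_lower_bound[of e] orthonormal_norm[of es e] eig_list_subset_D[of g es]
  unfolding eig_list_def by auto

lemma max_eig_list_exists: "\<exists>es. max_eig_list g es"
proof -
  obtain M where M0: "\<And>es. orthonormal es \<Longrightarrow> set es \<subseteq> energy_ball g \<Longrightarrow> length es \<le> M"
    using orthonormal_length_bounded[OF energy_ball_totally_bounded] by blast
  have M: "length es \<le> M" if "eig_list g es" for es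
  proof (rule M0)
    show "orthonormal es" using that by (simp add: eig_list_def)
    show "set es \<subseteq> energy_ball g"
      using that orthonormal_norm unfolding eig_list_def energy_ball_def by (auto simp: eigvec_def)
  qed
  define P where "P n \<longleftrightarrow> (\<exists>es. eig_list g es \<and> length es = n)" for n
  have "P 0" unfolding P_def by (intro exI[of _ "[]"]) (simp add: eig_list_def orthonormal_def)
  then obtain n where "P n" "\<forall>n'. P n' \<longrightarrow> n' \<le> n"
    using Nat.ex_has_greatest_nat[of P 0 M] M unfolding P_def by blast
  thus ?thesis unfolding max_eig_list_def P_def by blast
qed

text \<open>Otherwise the normalised component of \<open>v\<close> orthogonal to \<open>es\<close> would extend the list.\<close>

lemma max_eig_list_proj:
  assumes me: "max_eig_list g es" and v: "eigvec m v" and m: "m < g"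
  shows "proj es v = v"
proof (rule ccontr)
  assume ne: "proj es v \<noteq> v"
  have el: "eig_list g es" and o: "orthonormal es" using me by (auto simp: max_eig_list_def eig_list_def)
  have "sc (ip v e) e \<in> eigenspace m" if "e \<in> set es" for e
  proof (cases "qform e = m")
    case True
    thus ?thesis using el that V.subspace_scale[OF eigenspace_subspace]
      by (auto simp: eig_list_def eigenspace_def)
  next
    case False
    hence "ip v e = 0" using eigvec_orthogonal[OF v] el that by (auto simp: eig_list_def)
    thus ?thesis using eigenspace_subspace V.subspace_0 by simp
  qed
  hence "proj es v \<in> eigenspace m"
    unfolding proj_as_set_sum[OF orthonormal_distinct[OF o]]
    by (intro V.subspace_sum[OF eigenspace_subspace])
  hence "v - proj es v \<in> eigenspace m"
    using v eigenspace_subspace V.subspace_diff by (auto simp: eigenspace_def)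
  define e' where "e' = (1 / norm (v - proj es v)) *\<^sub>R (v - proj es v)"
  have "eigvec m e'"
    using V.subspace_scale[OF eigenspace_subspace \<open>v - proj es v \<in> _\<close>]
    by (simp add: e'_def eigenspace_def flip: sc_of_real)
  moreover have "norm e' = 1" using ne by (simp add: e'_def)
  moreover have "orth_to es e'"
    unfolding e'_def by (intro orth_to_scaleR orth_to_minus_proj[OF o])
  ultimately have "eig_list g (es @ [e'])"
    using el m orthonormal_snoc[OF o] qform_eigvec by (auto simp: eig_list_def)
  thus False using me by (fastforce simp: max_eig_list_def)
qed

lemma max_eig_list_eigenvalues:
  assumes me: "max_eig_list g es"
  shows "qform ` set es = {m. m < g \<and> is_eigenvalue sc D T m}"
proof
  have el: "eig_list g es" and o: "orthonormal es" using me by (auto simp: max_eig_list_def eig_list_def)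
  show "qform ` set es \<subseteq> {m. m < g \<and> is_eigenvalue sc D T m}"
  proof
    fix m assume "m \<in> qform ` set es"
    then obtain e where e: "e \<in> set es" "m = qform e" by blast
    have "e \<noteq> 0" using orthonormal_norm[OF o e(1)] by auto
    thus "m \<in> {m. m < g \<and> is_eigenvalue sc D T m}"
      using el e by (auto simp: eig_list_def is_eigenvalue_iff)
  qed
  show "{m. m < g \<and> is_eigenvalue sc D T m} \<subseteq> qform ` set es"
  proof (safe, rule ccontr)
    fix m assume "m < g" "is_eigenvalue sc D T m" "m \<notin> qform ` set es"
    then obtain v where v: "eigvec m v" "v \<noteq> 0" by (auto simp: is_eigenvalue_iff)
    have "orth_to es v"
      using el eigvec_orthogonal[OF v(1)] \<open>m \<notin> _\<close> by (fastforce simp: orth_to_def eig_list_def)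
    thus False using max_eig_list_proj[OF me v(1) \<open>m < g\<close>] proj_eq_0 v(2) by simp
  qed
qed

lemma max_eig_list_eig_mult:
  assumes me: "max_eig_list g es" and m: "m < g"
  shows "eig_mult sc D T m = length (filter (\<lambda>e. qform e = m) es)"
proof -
  have el: "eig_list g es" and o: "orthonormal es" using me by (auto simp: max_eig_list_def eig_list_def)
  define fs where "fs = filter (\<lambda>e. qform e = m) es"
  have ofs: "orthonormal fs" unfolding fs_def using o by (rule orthonormal_filter)
  have "V.dim (eigenspace m) = length fs"
  proof (rule dim_eq_length_orthonormal[OF eigenspace_subspace ofs])
    show "set fs \<subseteq> eigenspace m" using el by (auto simp: fs_def eig_list_def eigenspace_def)
    fix v assume "v \<in> eigenspace m"
    hence v: "eigvec m v" by (simp add: eigenspace_def)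
    have "v = (\<Sum>e\<in>set es. sc (ip v e) e)"
      using max_eig_list_proj[OF me v m] proj_as_set_sum[OF orthonormal_distinct[OF o]] by simp
    also have "\<dots> = (\<Sum>e\<in>set fs. sc (ip v e) e)"
    proof (rule sum.mono_neutral_right)
      show "\<forall>e\<in>set es - set fs. sc (ip v e) e = 0"
        using el eigvec_orthogonal[OF v] by (fastforce simp: fs_def eig_list_def)
    qed (auto simp: fs_def)
    also have "\<dots> = proj fs v" by (rule proj_as_set_sum[OF orthonormal_distinct[OF ofs], symmetric])
    finally show "\<exists>c. v = lincomb c fs" unfolding proj_def by blast
  qed
  thus ?thesis unfolding eig_mult_eq_dim fs_def .
qed

lemma max_eig_list_length:
  assumes me: "max_eig_list g es"
  shows "length es = (\<Sum>m\<in>{m. m < g \<and> is_eigenvalue sc D T m}. eig_mult sc D T m)"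
proof -
  have el: "eig_list g es" and d: "distinct es"
    using me orthonormal_distinct by (auto simp: max_eig_list_def eig_list_def)
  have "length es = (\<Sum>m\<in>qform ` set es. card {e\<in>set es. qform e = m})"
    using sum.group[of "set es" "qform ` set es" qform "\<lambda>_. 1::nat"] distinct_card[OF d] by simp
  also have "\<dots> = (\<Sum>m\<in>qform ` set es. eig_mult sc D T m)"
  proof (rule sum.cong[OF refl])
    fix m assume "m \<in> qform ` set es"
    hence "m < g" using el by (auto simp: eig_list_def)
    thus "card {e\<in>set es. qform e = m} = eig_mult sc D T m"
      using max_eig_list_eig_mult[OF me] distinct_length_filter[OF d]
      by (simp add: Int_def conj_commute)
  qed
  finally show ?thesis using max_eig_list_eigenvalues[OF me] by simp
qed

lemma finite_eigenvalues_below: "finite {m. m < g \<and> is_eigenvalue sc D T m}"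
proof -
  obtain es where "max_eig_list g es" using max_eig_list_exists by blast
  from max_eig_list_eigenvalues[OF this] show ?thesis by (metis finite_imageI finite_set)
qed

lemma eig_mult_pos: "is_eigenvalue sc D T m \<Longrightarrow> 1 \<le> eig_mult sc D T m"
proof -
  assume m: "is_eigenvalue sc D T m"
  obtain es where me: "max_eig_list (m + 1) es" using max_eig_list_exists by blast
  have "m \<in> qform ` set es" using max_eig_list_eigenvalues[OF me] m by simp
  hence "filter (\<lambda>e. qform e = m) es \<noteq> []" by (auto simp: filter_empty_conv)
  thus ?thesis using max_eig_list_eig_mult[OF me, of m] by (simp add: Suc_le_eq)
qed

lemma eig_mult_eq_0: "\<not> is_eigenvalue sc D T m \<Longrightarrow> eig_mult sc D T m = 0"
proof -
  assume "\<not> is_eigenvalue sc D T m"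
  hence "V.dim (eigenspace m) = length ([] :: 'h list)"
    by (intro dim_eq_length_orthonormal[OF eigenspace_subspace])
      (auto simp: orthonormal_def lincomb_def eigenspace_def is_eigenvalue_iff)
  thus ?thesis by (simp add: eig_mult_eq_dim)
qed

lemma T_lincomb_eig_list:
  assumes el: "eig_list g es"
  shows "T (lincomb c es) = lincomb (\<lambda>j. c j * complex_of_real (qform (es!j))) es"
proof -
  have ev: "es!j \<in> D" "T (es!j) = sc (complex_of_real (qform (es!j))) (es!j)" if "j < length es" for j
    using el that nth_mem unfolding eig_list_def eigvec_def by blast+
  have "T (lincomb c es) = (\<Sum>j<length es. T (sc (c j) (es!j)))"
    unfolding lincomb_def using ev by (intro T_sum) (auto intro: D_sc)
  also have "\<dots> = (\<Sum>j<length es. sc (c j * complex_of_real (qform (es!j))) (es!j))"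
    using ev by (intro sum.cong) (auto simp: T_sc)
  finally show ?thesis by (simp add: lincomb_def)
qed

lemma lincomb_eig_list_mem: "eig_list g es \<Longrightarrow> lincomb c es \<in> D"
  using eig_list_subset_D lincomb_in_subspace[OF D_subspace] by blast

lemma qform_lincomb_eig_list:
  assumes el: "eig_list g es"
  shows "qform (lincomb c es) = (\<Sum>j<length es. (cmod (c j))\<^sup>2 * qform (es!j))"
proof -
  have o: "orthonormal es" using el by (simp add: eig_list_def)
  have "qform (lincomb c es) = Re (\<Sum>j<length es. c j * complex_of_real (qform (es!j)) * cnj (c j))"
    by (simp add: qform_def T_lincomb_eig_list[OF el] ip_lincomb_lincomb[OF o])
  also have "\<dots> = (\<Sum>j<length es. (cmod (c j))\<^sup>2 * qform (es!j))"
  proof (simp only: Re_sum, rule sum.cong[OF refl])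
    fix j
    have "c j * cnj (c j) = complex_of_real ((cmod (c j))\<^sup>2)" by (rule complex_norm_square[symmetric])
    hence "c j * complex_of_real (qform (es!j)) * cnj (c j) = complex_of_real ((cmod (c j))\<^sup>2 * qform (es!j))"
      by (metis mult.commute mult.left_commute of_real_mult)
    thus "Re (c j * complex_of_real (qform (es!j)) * cnj (c j)) = (cmod (c j))\<^sup>2 * qform (es!j)"
      by (simp only: Re_complex_of_real)
  qed
  finally show ?thesis .
qed

lemma Rayleigh_quotient_inf:
  assumes v: "v \<in> D" "orth_to es v" "v \<noteq> 0"
  obtains m0 s where "\<And>u. u \<in> D \<Longrightarrow> orth_to es u \<Longrightarrow> m0 * (norm u)\<^sup>2 \<le> qform u"
    and "\<And>n. s n \<in> D" "\<And>n. orth_to es (s n)" "\<And>n. norm (s n) = 1"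
    and "\<And>n. qform (s n) < m0 + 1 / Suc n"
proof -
  define U where "U = qform ` {u\<in>D. orth_to es u \<and> norm u = 1}"
  have normalise: "(1 / norm u) *\<^sub>R u \<in> D \<and> orth_to es ((1 / norm u) *\<^sub>R u) \<and> norm ((1 / norm u) *\<^sub>R u) = 1
      \<and> qform ((1 / norm u) *\<^sub>R u) = qform u / (norm u)\<^sup>2"
    if "u \<in> D" "orth_to es u" "u \<noteq> 0" for u
    using that by (simp add: D_scaleR orth_to_scaleR qform_scaleR power_divide)
  have Une: "U \<noteq> {}" using normalise[OF v] by (auto simp: U_def)
  have Ubdd: "bdd_below U"
  proof (rule bdd_belowI[of _ mu])
    fix x assume "x \<in> U"
    then obtain u where "u \<in> D" "norm u = 1" "x = qform u" by (auto simp: U_def)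
    thus "mu \<le> x" using qform_lower_bound[of u] by simp
  qed
  have "Inf U * (norm u)\<^sup>2 \<le> qform u" if u: "u \<in> D" "orth_to es u" for u
  proof (cases "u = 0")
    case False
    hence "Inf U \<le> qform u / (norm u)\<^sup>2"
      using normalise[OF u False] Ubdd by (metis (mono_tags, lifting) U_def cInf_lower image_eqI mem_Collect_eq)
    thus ?thesis using False by (simp add: le_divide_eq)
  qed (simp add: qform_def)
  moreover have "\<exists>u. u \<in> D \<and> orth_to es u \<and> norm u = 1 \<and> qform u < Inf U + 1 / Suc n" for n
    using cInf_less_iff[OF Une Ubdd, of "Inf U + 1 / Suc n"] by (auto simp: U_def)
  then obtain s where "\<And>n. s n \<in> D" "\<And>n. orth_to es (s n)" "\<And>n. norm (s n) = 1"
      "\<And>n. qform (s n) < Inf U + 1 / Suc n"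
    by metis
  ultimately show thesis by (rule that)
qed

lemma Rayleigh_minimizing_sequence:
  assumes v: "v \<in> D" "orth_to es v" "v \<noteq> 0"
  obtains m0 t y where "\<And>u. u \<in> D \<Longrightarrow> orth_to es u \<Longrightarrow> m0 * (norm u)\<^sup>2 \<le> qform u"
    and "\<And>n. t n \<in> D" "\<And>n. orth_to es (t n)" "\<And>n. norm (t n) = 1"
    and "t \<longlonglongrightarrow> y" "(\<lambda>n. qform (t n)) \<longlonglongrightarrow> m0"
proof -
  obtain m0 s where min: "\<And>u. u \<in> D \<Longrightarrow> orth_to es u \<Longrightarrow> m0 * (norm u)\<^sup>2 \<le> qform u"
    and s: "\<And>n. s n \<in> D" "\<And>n. orth_to es (s n)" "\<And>n. norm (s n) = 1"
      "\<And>n. qform (s n) < m0 + 1 / Suc n"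
    using Rayleigh_quotient_inf[OF v] by blast
  have "qform (s n) \<le> m0 + 1" for n
    using s(4)[of n] divide_le_eq_1_pos[of "real (Suc n)" 1] by linarith
  hence "s n \<in> energy_ball (m0 + 1)" for n using s(1,3) by (simp add: energy_ball_def)
  then obtain r where r: "strict_mono r" "Cauchy (s \<circ> r)"
    using energy_ball_Cauchy_subseq by blast
  then obtain y where y: "(s \<circ> r) \<longlonglongrightarrow> y" using Cauchy_convergent_iff convergent_def by blast
  have "(\<lambda>n. qform ((s \<circ> r) n)) \<longlonglongrightarrow> m0"
  proof (rule tendsto_sandwich[of "\<lambda>n. m0" _ _ "\<lambda>n. m0 + 1 / Suc n"])
    show "\<forall>\<^sub>F n in sequentially. m0 \<le> qform ((s \<circ> r) n)" using s min[of "s _"] by simp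
    have "qform ((s \<circ> r) n) \<le> m0 + 1 / Suc n" for n
    proof -
      have "1 / real (Suc (r n)) \<le> 1 / Suc n"
        using seq_suble[OF r(1), of n] by (intro divide_left_mono) auto
      thus ?thesis using s(4)[of "r n"] by simp
    qed
    thus "\<forall>\<^sub>F n in sequentially. qform ((s \<circ> r) n) \<le> m0 + 1 / Suc n" by simp
    show "(\<lambda>n. m0 + 1 / Suc n) \<longlonglongrightarrow> m0"
      using tendsto_add[OF tendsto_const LIMSEQ_Suc[OF lim_inverse_n'], of m0] by simp
  qed simp
  thus thesis using that[OF min, of "s \<circ> r" y] s y by simp
qed

lemma Rayleigh_minimizer_Euler_Lagrange:
  assumes min: "\<And>u. u \<in> D \<Longrightarrow> orth_to es u \<Longrightarrow> m0 * (norm u)\<^sup>2 \<le> qform u"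
    and t: "\<And>n. t n \<in> D" "\<And>n. orth_to es (t n)" "\<And>n. norm (t n) = 1"
      "t \<longlonglongrightarrow> y" "(\<lambda>n. qform (t n)) \<longlonglongrightarrow> m0"
    and u: "u \<in> D" "orth_to es u"
  shows "ip (T u - sc (complex_of_real m0) u) y = 0"
proof -
  have Re0: "sform m0 v y = 0" if v: "v \<in> D" "orth_to es v" for v
  proof -
    have "0 \<le> 2 * sform m0 v y * s + sform m0 v v * s\<^sup>2" for s
    proof -
      have "(\<lambda>n. sform m0 (t n) (t n) + 2 * sform m0 v (t n) * s + sform m0 v v * s\<^sup>2)
          \<longlonglongrightarrow> 0 + 2 * sform m0 v y * s + sform m0 v v * s\<^sup>2"
      proof (intro tendsto_intros)
        show "(\<lambda>n. sform m0 (t n) (t n)) \<longlonglongrightarrow> 0"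
          using tendsto_diff[OF t(5) tendsto_const[of m0]] t(3) by (simp add: sform_self)
        show "(\<lambda>n. sform m0 v (t n)) \<longlonglongrightarrow> sform m0 v y"
          unfolding sform_def using t(4) by (intro tendsto_intros)
      qed
      moreover have "0 \<le> sform m0 (t n) (t n) + 2 * sform m0 v (t n) * s + sform m0 v v * s\<^sup>2" for n
      proof -
        have "0 \<le> sform m0 (t n + s *\<^sub>R v) (t n + s *\<^sub>R v)"
          using min[of "t n + s *\<^sub>R v"] t v
          by (simp add: sform_self D_add D_scaleR orth_to_add orth_to_scaleR)
        thus ?thesis using sform_expand[OF t(1) v(1)] sform_commute[OF t(1) v(1)] by simp
      qed
      ultimately show ?thesis by (intro tendsto_lowerbound[OF _ _ sequentially_bot]) auto
    qed
    thus ?thesis using linear_nonneg_imp_zero[of "2 * sform m0 v y" "sform m0 v v"] by simp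
  qed
  have "Re (ip (T u - sc (complex_of_real m0) u) y) = 0" using Re0[OF u] by (simp add: sform_def)
  moreover have "Re (\<i> * ip (T u - sc (complex_of_real m0) u) y) = 0"
  proof -
    have "T (sc \<i> u) - sc (complex_of_real m0) (sc \<i> u) = sc \<i> (T u - sc (complex_of_real m0) u)"
      using u by (simp add: T_sc V.scale_right_diff_distrib mult.commute)
    hence "sform m0 (sc \<i> u) y = Re (\<i> * ip (T u - sc (complex_of_real m0) u) y)"
      by (simp only: sform_def ip_sc_left)
    thus ?thesis using Re0[of "sc \<i> u"] u by (simp add: D_sc orth_to_sc)
  qed
  ultimately show ?thesis by (simp add: complex_eq_iff)
qed

text \<open>If \<open>T - m0\<close> maps \<open>D \<inter> es\<^sup>\<bottom>\<close> into \<open>y\<^sup>\<bottom>\<close>, so does it map \<open>D\<close>, because \<open>T - m0\<close> maps the span of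
the eigenvectors \<open>es\<close> into itself; self-adjointness then makes \<open>y\<close> an eigenvector.\<close>

lemma eigvec_if_orth_to_range:
  assumes el: "eig_list g es" and y: "orth_to es y"
    and orth: "\<And>u. u \<in> D \<Longrightarrow> orth_to es u \<Longrightarrow> ip (T u - sc (complex_of_real m0) u) y = 0"
  shows "eigvec m0 y"
proof -
  have o: "orthonormal es" and esD: "set es \<subseteq> D"
    using el eig_list_subset_D by (auto simp: eig_list_def)
  let ?L = "\<lambda>x. T x - sc (complex_of_real m0) x"
  have "ip (?L x) y = 0" if x: "x \<in> D" for x
  proof -
    have PD: "proj es x \<in> D" using esD by (intro proj_in_subspace[OF D_subspace])
    have "ip (T (proj es x)) y = 0" "ip (proj es x) y = 0"
      unfolding proj_def T_lincomb_eig_list[OF el] by (rule ip_lincomb_eq_0[OF y])+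
    hence "ip (?L (proj es x)) y = 0" by (simp add: ip_diff_left ip_sc_left)
    moreover have "ip (?L (x - proj es x)) y = 0"
      using orth[of "x - proj es x"] x PD orth_to_minus_proj[OF o] by (simp add: D_diff)
    ultimately show ?thesis
      using x PD by (simp add: T_diff V.scale_right_diff_distrib ip_diff_left)
  qed
  hence "y \<in> D \<and> T y = sc (complex_of_real m0) y"
    by (intro T_adjoint) (simp add: ip_diff_left ip_sc_left ip_sc_right)
  thus ?thesis by (simp add: eigvec_def)
qed

text \<open>Otherwise the Rayleigh quotient on \<open>D\<close> orthogonal to \<open>es\<close> would attain an infimum below \<open>g\<close>
at an eigenvector orthogonal to \<open>es\<close>, contradicting \<open>max_eig_list_proj\<close>.\<close>

lemma max_eig_list_variational:
  assumes me: "max_eig_list g es" and w: "w \<in> D" "orth_to es w"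
  shows "g * (norm w)\<^sup>2 \<le> qform w"
proof (rule ccontr)
  assume lt: "\<not> g * (norm w)\<^sup>2 \<le> qform w"
  hence "w \<noteq> 0" by (auto simp: qform_def)
  then obtain m0 t y where min: "\<And>u. u \<in> D \<Longrightarrow> orth_to es u \<Longrightarrow> m0 * (norm u)\<^sup>2 \<le> qform u"
    and t: "\<And>n. t n \<in> D" "\<And>n. orth_to es (t n)" "\<And>n. norm (t n) = 1"
      "t \<longlonglongrightarrow> y" "(\<lambda>n. qform (t n)) \<longlonglongrightarrow> m0"
    using Rayleigh_minimizing_sequence[OF w] by blast
  have el: "eig_list g es" using me by (simp add: max_eig_list_def)
  have "m0 * (norm w)\<^sup>2 < g * (norm w)\<^sup>2" using min[OF w] lt by simp
  hence "m0 < g" using \<open>w \<noteq> 0\<close> by (simp add: mult_less_cancel_right)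
  have oy: "orth_to es y"
    unfolding orth_to_def
  proof
    fix e assume e: "e \<in> set es"
    have "(\<lambda>n. ip (t n) e) \<longlonglongrightarrow> ip y e" using t(4) by (intro tendsto_intros)
    moreover have "ip (t n) e = 0" for n using t(2)[of n] e by (simp add: orth_to_def)
    ultimately show "ip y e = 0" by (simp add: LIMSEQ_const_iff)
  qed
  moreover have "norm y = 1" using tendsto_norm[OF t(4)] t(3) by (simp add: LIMSEQ_const_iff)
  moreover have "eigvec m0 y"
    using Rayleigh_minimizer_Euler_Lagrange[OF min t] by (intro eigvec_if_orth_to_range[OF el oy])
  ultimately show False using max_eig_list_proj[OF me _ \<open>m0 < g\<close>] proj_eq_0 by fastforce
qed

lemma form_closure_on_D:
  assumes fc: "is_form_closure D qform Df f" and x: "x \<in> D"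
  shows "x \<in> Df \<and> f x = qform x"
proof -
  have fcv: "form_convergent D qform (\<lambda>n. x) x" using x by (simp add: form_convergent_def qform_def)
  hence "(\<lambda>n. qform x) \<longlonglongrightarrow> f x" using fc unfolding is_form_closure_def by blast
  hence "f x = qform x" by (simp add: LIMSEQ_const_iff)
  moreover have "x \<in> Df" using fc fcv unfolding is_form_closure_def by blast
  ultimately show ?thesis by simp
qed

text \<open>The variational inequality passes to the closure of the form: along an approximating sequence
the components in the span of \<open>es\<close> vanish in the limit, energy included.\<close>

lemma max_eig_list_variational_closure:
  assumes fc: "is_form_closure D qform Df f" and me: "max_eig_list g es"
    and y: "y \<in> Df" "orth_to es y"
  shows "g * (norm y)\<^sup>2 \<le> f y"
proof -
  have el: "eig_list g es" and o: "orthonormal es" using me by (auto simp: max_eig_list_def eig_list_def)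
  obtain s where s: "form_convergent D qform s y" using fc y unfolding is_form_closure_def by blast
  have sD: "\<And>n. s n \<in> D" and sy: "s \<longlonglongrightarrow> y" using s by (auto simp: form_convergent_def)
  have qf: "(\<lambda>n. qform (s n)) \<longlonglongrightarrow> f y" using fc s unfolding is_form_closure_def by blast
  define P where "P n = proj es (s n)" for n
  have PD: "P n \<in> D" for n unfolding P_def using eig_list_subset_D[OF el]
    by (intro proj_in_subspace[OF D_subspace])
  have s'D: "s n - P n \<in> D" for n by (simp add: D_diff sD PD)
  have os': "orth_to es (s n - P n)" for n unfolding P_def by (rule orth_to_minus_proj[OF o])
  have TP: "T (P n) = lincomb (\<lambda>j. ip (s n) (es!j) * complex_of_real (qform (es!j))) es" for n
    unfolding P_def proj_def by (rule T_lincomb_eig_list[OF el])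
  have P0: "P \<longlonglongrightarrow> 0" unfolding P_def using tendsto_proj[OF sy, of es] proj_eq_0[OF y(2)] by simp
  have "(\<lambda>n. T (P n)) \<longlonglongrightarrow> lincomb (\<lambda>j. ip y (es!j) * complex_of_real (qform (es!j))) es"
    unfolding TP using sy by (intro tendsto_lincomb tendsto_intros)
  hence "(\<lambda>n. T (P n)) \<longlonglongrightarrow> 0" using y(2) by (simp add: lincomb_def orth_to_def)
  hence qP0: "(\<lambda>n. qform (P n)) \<longlonglongrightarrow> 0"
    using tendsto_ip[OF _ P0] unfolding qform_def by (metis ip_zero_left tendsto_Re zero_complex.sel(1))
  have split: "qform (s n) = qform (s n - P n) + qform (P n)" for n
  proof -
    have "sform 0 (P n) (s n - P n) = Re (ip (T (P n)) (s n - P n))" by (simp add: sform_def)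
    also have "\<dots> = 0" unfolding TP using ip_lincomb_eq_0[OF os'] by simp
    finally have "sform 0 (s n - P n) (P n) = 0" using sform_commute[OF PD s'D] by simp
    thus ?thesis using sform_expand[OF s'D[of n] PD[of n], of 0 1] by (simp add: sform_self)
  qed
  have "(\<lambda>n. g * (norm (s n - P n))\<^sup>2 + qform (P n)) \<longlonglongrightarrow> g * (norm (y - 0))\<^sup>2 + 0"
    using sy P0 qP0 by (intro tendsto_intros)
  moreover have "g * (norm (s n - P n))\<^sup>2 + qform (P n) \<le> qform (s n)" for n
    using max_eig_list_variational[OF me s'D os'] split[of n] by simp
  ultimately show ?thesis using qf by (auto intro: tendsto_le[OF sequentially_bot qf])
qed

end

section \<open>Counting negative eigenvalues through the resolvent\<close>

lemma abs_norm_sq_diff_le: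
  fixes a b y :: "'a::real_normed_vector"
  assumes "norm a \<le> norm y" "norm b \<le> norm y" "norm (a - b) \<le> \<rho> * norm y"
  shows "\<bar>(norm a)\<^sup>2 - (norm b)\<^sup>2\<bar> \<le> 2 * \<rho> * (norm y)\<^sup>2"
proof -
  have "(norm a)\<^sup>2 - (norm b)\<^sup>2 = (norm a - norm b) * (norm a + norm b)"
    by (simp add: power2_eq_square algebra_simps)
  hence "\<bar>(norm a)\<^sup>2 - (norm b)\<^sup>2\<bar> = \<bar>norm a - norm b\<bar> * (norm a + norm b)"
    by (simp add: abs_mult)
  also have "\<dots> \<le> (\<rho> * norm y) * (2 * norm y)"
  proof -
    have d: "\<bar>norm a - norm b\<bar> \<le> \<rho> * norm y" using norm_triangle_ineq3[of a b] assms(3) by linarith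
    have "norm a + norm b \<le> 2 * norm y" using assms(1,2) by linarith
    thus ?thesis using mult_mono[OF d _ order_trans[OF abs_ge_zero d]] by simp
  qed
  finally show ?thesis by (simp add: power2_eq_square algebra_simps)
qed

text \<open>\<open>eig_excess s m\<close> is the value of \<open>rform s e - (norm e)\<^sup>2\<close> on a unit eigenvector \<open>e\<close> for the
eigenvalue \<open>m\<close>; it is positive exactly for \<open>-s < m < 0\<close>.\<close>

definition eig_excess :: "real \<Rightarrow> real \<Rightarrow> real" where
  "eig_excess s m = - m * (m + s) / (m\<^sup>2 + 1)"

lemma eig_excess_eq: "a / (m\<^sup>2 + 1) - s * (a * m / (m\<^sup>2 + 1)) - a = a * eig_excess s m"
proof -
  have pos: "m\<^sup>2 + 1 > 0" by (simp add: add_nonneg_pos)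
  have "a / (m\<^sup>2 + 1) - s * (a * m / (m\<^sup>2 + 1)) - a = (a - s * a * m - a * (m\<^sup>2 + 1)) / (m\<^sup>2 + 1)"
    using pos by (simp add: diff_divide_distrib)
  also have "a - s * a * m - a * (m\<^sup>2 + 1) = a * (- m * (m + s))"
    by (simp add: algebra_simps power2_eq_square)
  finally show ?thesis by (simp add: eig_excess_def)
qed

lemma cmod_complex_div_sq: "(cmod (c / (complex_of_real m - \<i>)))\<^sup>2 = (cmod c)\<^sup>2 / (m\<^sup>2 + 1)"
  by (simp add: norm_divide power_divide cmod_power2)

lemma Re_complex_div_cnj: "Re (c * cnj c / (complex_of_real m - \<i>)) = (cmod c)\<^sup>2 * m / (m\<^sup>2 + 1)"
proof -
  have "c * cnj c = complex_of_real ((cmod c)\<^sup>2)" by (rule complex_norm_square[symmetric])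
  hence "c * cnj c / (complex_of_real m - \<i>) = complex_of_real ((cmod c)\<^sup>2) / (complex_of_real m - \<i>)"
    by simp
  also have "Re \<dots> = (cmod c)\<^sup>2 * m / (m\<^sup>2 + 1)" by (simp add: Re_divide)
  finally show ?thesis .
qed

lemma eig_excess_pos: "- s < m \<Longrightarrow> m < 0 \<Longrightarrow> 0 < eig_excess s m"
  unfolding eig_excess_def by (intro divide_pos_pos mult_pos_pos) (auto simp: add_nonneg_pos)

context sa_operator
begin

text \<open>Unlike \<open>qform\<close>, this form is defined on the whole space and depends continuously on the
resolvent, while \<open>rform s - (norm _)\<^sup>2\<close> still detects the negative eigenvalues above \<open>-s\<close>.\<close>

definition rform :: "real \<Rightarrow> 'h \<Rightarrow> real" where
  "rform s y = (norm (Ri y))\<^sup>2 - s * Re (ip (Ri y) y)"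

lemma Re_ip_Ri_self: "Re (ip (Ri y) y) = qform (Ri y)"
proof -
  have "ip (Ri y) y = ip (Ri y) (T (Ri y)) - ip (Ri y) (sc \<i> (Ri y))"
    using Ri_eq[of y] by (metis ip_diff_right)
  thus ?thesis by (simp add: ip_sc_right ip_self qform_def Re_ip_commute)
qed

lemma orth_to_Ri:
  assumes el: "eig_list g es" and y: "orth_to es y"
  shows "orth_to es (Ri y)"
  unfolding orth_to_def
proof
  fix e assume e: "e \<in> set es"
  have ev: "eigvec (qform e) e" using el e by (simp add: eig_list_def)
  have "ip y e = ip (T (Ri y)) e - ip (sc \<i> (Ri y)) e" using Ri_eq[of y] by (metis ip_diff_left)
  also have "ip (T (Ri y)) e = complex_of_real (qform e) * ip (Ri y) e"
    using ev Ri_mem T_sym by (simp add: eigvec_def ip_sc_right)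
  finally have "ip y e = (complex_of_real (qform e) - \<i>) * ip (Ri y) e"
    by (simp add: ip_sc_left algebra_simps)
  moreover have "ip y e = 0" "complex_of_real (qform e) - \<i> \<noteq> 0"
    using y e by (auto simp: orth_to_def complex_eq_iff)
  ultimately show "ip (Ri y) e = 0" by simp
qed

lemma rform_le_if_orth_to_neg:
  assumes me: "max_eig_list 0 es" and y: "orth_to es y" and s: "0 \<le> s"
  shows "rform s y \<le> (norm y)\<^sup>2"
proof -
  have el: "eig_list 0 es" using me by (simp add: max_eig_list_def)
  have "0 \<le> qform (Ri y)"
    using max_eig_list_variational[OF me Ri_mem orth_to_Ri[OF el y]] by simp
  hence "0 \<le> s * qform (Ri y)" using s by simp
  moreover have "(norm (Ri y))\<^sup>2 \<le> (norm y)\<^sup>2" using Ri_norm_le by (simp add: power_mono)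
  ultimately show ?thesis unfolding rform_def Re_ip_Ri_self by linarith
qed

lemma rform_le_if_orth_to_gap:
  assumes me: "max_eig_list g es" and y: "orth_to es y" and g: "0 < g" and s: "0 < s"
  shows "rform s y \<le> (1 - min (s * g) 1) * (norm y)\<^sup>2"
proof -
  have el: "eig_list g es" using me by (simp add: max_eig_list_def)
  have "g * (norm (Ri y))\<^sup>2 \<le> qform (Ri y)"
    by (rule max_eig_list_variational[OF me Ri_mem orth_to_Ri[OF el y]])
  hence "rform s y \<le> (1 - s * g) * (norm (Ri y))\<^sup>2"
    using s by (simp add: rform_def Re_ip_Ri_self algebra_simps mult_left_mono)
  also have "\<dots> \<le> (1 - min (s * g) 1) * (norm (Ri y))\<^sup>2" by (intro mult_right_mono) auto
  also have "\<dots> \<le> (1 - min (s * g) 1) * (norm y)\<^sup>2"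
    using Ri_norm_le by (intro mult_left_mono power_mono) auto
  finally show ?thesis .
qed

lemma rform_lincomb_eig_list:
  assumes el: "eig_list g es"
  shows "rform s (lincomb c es) - (norm (lincomb c es))\<^sup>2 =
    (\<Sum>j<length es. (cmod (c j))\<^sup>2 * eig_excess s (qform (es!j)))"
proof -
  have o: "orthonormal es" using el by (simp add: eig_list_def)
  define m where "m j = qform (es!j)" for j
  have ev: "eigvec (m j) (es!j)" if "j < length es" for j
    using el that nth_mem by (auto simp: eig_list_def m_def)
  have "Ri (lincomb c es) = lincomb (\<lambda>j. c j / (complex_of_real (m j) - \<i>)) es"
    unfolding lincomb_def Ri_sum using Ri_eigvec[OF ev] by (auto simp: Ri_sc intro!: sum.cong)
  hence "rform s (lincomb c es) - (norm (lincomb c es))\<^sup>2 = (\<Sum>j<length es.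
      (cmod (c j))\<^sup>2 / ((m j)\<^sup>2 + 1) - s * ((cmod (c j))\<^sup>2 * m j / ((m j)\<^sup>2 + 1)) - (cmod (c j))\<^sup>2)"
    by (simp add: rform_def norm_lincomb_sq[OF o] ip_lincomb_lincomb[OF o] Re_sum
        sum_subtractf sum_distrib_left cmod_complex_div_sq Re_complex_div_cnj)
  also have "\<dots> = (\<Sum>j<length es. (cmod (c j))\<^sup>2 * eig_excess s (m j))"
    by (rule sum.cong[OF refl]) (rule eig_excess_eq)
  finally show ?thesis by (simp add: m_def)
qed

lemma eig_excess_pos_on_neg_list:
  assumes el: "eig_list 0 es" and s: "- s < mu" and j: "j < length es"
  shows "0 < eig_excess s (qform (es!j))"
proof (rule eig_excess_pos)
  show "qform (es!j) < 0" using el j by (simp add: eig_list_def)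
  show "- s < qform (es!j)" using eig_list_lower_bound[OF el nth_mem[OF j]] s by simp
qed

lemma norm_sq_le_rform_on_neg_span:
  assumes el: "eig_list 0 es" and s: "- s < mu"
  shows "(norm (lincomb c es))\<^sup>2 \<le> rform s (lincomb c es)"
proof -
  have "0 \<le> (\<Sum>j<length es. (cmod (c j))\<^sup>2 * eig_excess s (qform (es!j)))"
    using eig_excess_pos_on_neg_list[OF el s] by (intro sum_nonneg mult_nonneg_nonneg) (auto intro: less_imp_le)
  thus ?thesis using rform_lincomb_eig_list[OF el, of s c] by simp
qed

lemma rform_gt_on_neg_span:
  assumes el: "eig_list 0 es" and s: "- s < mu"
  shows "\<exists>\<delta>>0. \<forall>c. (1 + \<delta>) * (norm (lincomb c es))\<^sup>2 \<le> rform s (lincomb c es)"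
proof -
  have o: "orthonormal es" using el by (simp add: eig_list_def)
  define \<delta> where "\<delta> = Min (insert 1 ((\<lambda>j. eig_excess s (qform (es!j))) ` {..<length es}))"
  have pos: "eig_excess s (qform (es!j)) > 0" if "j < length es" for j
    using eig_excess_pos_on_neg_list[OF el s that] .
  have "(1 + \<delta>) * (norm (lincomb c es))\<^sup>2 \<le> rform s (lincomb c es)" for c
  proof -
    have "\<delta> * (norm (lincomb c es))\<^sup>2 = (\<Sum>j<length es. (cmod (c j))\<^sup>2 * \<delta>)"
      by (simp add: norm_lincomb_sq[OF o] sum_distrib_left mult.commute)
    also have "\<dots> \<le> (\<Sum>j<length es. (cmod (c j))\<^sup>2 * eig_excess s (qform (es!j)))"
      unfolding \<delta>_def by (intro sum_mono mult_left_mono Min_le) auto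
    finally show ?thesis using rform_lincomb_eig_list[OF el, of s c] by (simp add: algebra_simps)
  qed
  moreover have "\<delta> > 0" unfolding \<delta>_def using pos by (subst Min_gr_iff) auto
  ultimately show ?thesis by blast
qed

definition neg_count :: nat where
  "neg_count = (\<Sum>m\<in>{m. m < 0 \<and> is_eigenvalue sc D T m}. eig_mult sc D T m)"

lemma max_eig_list_0_length: "max_eig_list 0 es \<Longrightarrow> length es = neg_count"
  using max_eig_list_length[of 0 es] by (simp add: neg_count_def)

text \<open>Eigenvalues below \<open>1\<close> are finite in number, so some \<open>g > 0\<close> lies below every positive one.\<close>

lemma max_eig_list_above_0:
  "\<exists>g>0. \<exists>es. max_eig_list g es \<and> length es = neg_count + eig_mult sc D T 0 \<and>
     (\<forall>e\<in>set es. qform e \<le> 0)"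
proof -
  define P where "P = {m. 0 < m \<and> m < 1 \<and> is_eigenvalue sc D T m}"
  have fP: "finite P" using finite_eigenvalues_below[of 1] by (rule rev_finite_subset) (auto simp: P_def)
  define g where "g = Min (insert 1 P)"
  have g: "g > 0" "\<And>x. x \<in> insert 1 P \<Longrightarrow> g \<le> x"
    unfolding g_def using fP by (auto simp: P_def Min_gr_iff)
  have iff: "m < g \<and> is_eigenvalue sc D T m \<longleftrightarrow> m \<le> 0 \<and> is_eigenvalue sc D T m" for m
  proof
    assume m: "m < g \<and> is_eigenvalue sc D T m"
    show "m \<le> 0 \<and> is_eigenvalue sc D T m"
    proof (rule ccontr)
      assume "\<not> (m \<le> 0 \<and> is_eigenvalue sc D T m)"
      hence "m \<in> P" using m g(2)[of 1] by (auto simp: P_def)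
      thus False using g(2)[of m] m by auto
    qed
  qed (use g(1) in auto)
  hence below: "{m. m < g \<and> is_eigenvalue sc D T m} = (if is_eigenvalue sc D T 0
      then insert 0 {m. m < 0 \<and> is_eigenvalue sc D T m} else {m. m < 0 \<and> is_eigenvalue sc D T m})"
    by (auto simp: order_le_less)
  obtain es where me: "max_eig_list g es" using max_eig_list_exists by blast
  have "length es = neg_count + eig_mult sc D T 0"
    using max_eig_list_length[OF me] finite_eigenvalues_below[of 0] eig_mult_eq_0[of 0]
    unfolding below neg_count_def by (cases "is_eigenvalue sc D T 0") simp_all
  moreover have "\<forall>e\<in>set es. qform e \<le> 0" using max_eig_list_eigenvalues[OF me] iff by blast
  ultimately show ?thesis using g me by blast
qed

lemma rform_diff_le:
  assumes S': "sa_operator sc ip D' T' mu'" and s: "0 \<le> s"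
  shows "\<bar>sa_operator.rform sc ip D' T' s y - rform s y\<bar>
     \<le> (2 + s) * onorm (\<lambda>y. resolvent sc D' T' \<i> y - resolvent sc D T \<i> y) * (norm y)\<^sup>2"
proof -
  interpret S': sa_operator sc ip D' T' mu' by (rule S')
  define \<rho> where "\<rho> = onorm (\<lambda>y. resolvent sc D' T' \<i> y - resolvent sc D T \<i> y)"
  have \<Delta>: "norm (S'.Ri y - Ri y) \<le> \<rho> * norm y"
    using onorm[OF bounded_linear_sub[OF S'.bounded_linear_Ri bounded_linear_Ri], of y]
    by (simp add: \<rho>_def S'.Ri_def Ri_def)
  have t1: "\<bar>(norm (S'.Ri y))\<^sup>2 - (norm (Ri y))\<^sup>2\<bar> \<le> 2 * \<rho> * (norm y)\<^sup>2"
    by (rule abs_norm_sq_diff_le[OF S'.Ri_norm_le Ri_norm_le \<Delta>])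
  have "\<bar>Re (ip (S'.Ri y) y) - Re (ip (Ri y) y)\<bar> \<le> norm (S'.Ri y - Ri y) * norm y"
    using abs_Re_ip_le[of "S'.Ri y - Ri y" y] by (simp add: ip_diff_left)
  also have "\<dots> \<le> \<rho> * (norm y)\<^sup>2"
    using mult_right_mono[OF \<Delta> norm_ge_zero[of y]] by (simp add: power2_eq_square mult.assoc)
  finally have t2: "\<bar>Re (ip (S'.Ri y) y) - Re (ip (Ri y) y)\<bar> \<le> \<rho> * (norm y)\<^sup>2" .
  have "\<bar>S'.rform s y - rform s y\<bar> \<le>
      \<bar>(norm (S'.Ri y))\<^sup>2 - (norm (Ri y))\<^sup>2\<bar> + s * \<bar>Re (ip (S'.Ri y) y) - Re (ip (Ri y) y)\<bar>"
  proof -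
    have "S'.rform s y - rform s y =
        ((norm (S'.Ri y))\<^sup>2 - (norm (Ri y))\<^sup>2) - s * (Re (ip (S'.Ri y) y) - Re (ip (Ri y) y))"
      unfolding S'.rform_def rform_def by (simp add: algebra_simps)
    thus ?thesis
      using abs_triangle_ineq4[of "(norm (S'.Ri y))\<^sup>2 - (norm (Ri y))\<^sup>2"
          "s * (Re (ip (S'.Ri y) y) - Re (ip (Ri y) y))"] s
      by (simp add: abs_mult)
  qed
  also have "\<dots> \<le> 2 * \<rho> * (norm y)\<^sup>2 + s * (\<rho> * (norm y)\<^sup>2)"
    using t1 t2 s by (intro add_mono mult_left_mono) auto
  finally show ?thesis by (simp add: \<rho>_def algebra_simps)
qed

lemma neg_count_bounds_if_rform_close:
  assumes S': "sa_operator sc ip D' T' mu" and s: "0 < s" "- s < mu"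
    and mn: "max_eig_list 0 ns"
    and lower: "\<And>c. (1 + \<alpha>) * (norm (lincomb c ns))\<^sup>2 \<le> rform s (lincomb c ns)"
    and upper: "\<And>y. orth_to ps y \<Longrightarrow> rform s y \<le> (1 - \<beta>) * (norm y)\<^sup>2"
    and close: "\<And>y. y \<noteq> 0 \<Longrightarrow>
      \<bar>sa_operator.rform sc ip D' T' s y - rform s y\<bar> < min \<alpha> \<beta> * (norm y)\<^sup>2"
  shows "neg_count \<le> sa_operator.neg_count sc D' T' \<and> sa_operator.neg_count sc D' T' \<le> length ps"
proof -
  interpret S': sa_operator sc ip D' T' mu by (rule S')
  obtain es where me: "S'.max_eig_list 0 es" using S'.max_eig_list_exists by blast
  have eln: "eig_list 0 ns" and el: "S'.eig_list 0 es"
    using mn me by (simp_all add: max_eig_list_def S'.max_eig_list_def)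
  have "length ns \<le> length es"
  proof (rule length_le_if_forms_close[where P = "rform s" and Q = "S'.rform s" and a = "1 + \<alpha>"
        and b = 1])
    show "orthonormal ns" using eln by (simp add: eig_list_def)
    show "S'.rform s y \<le> 1 * (norm y)\<^sup>2" if "orth_to es y" for y
      using S'.rform_le_if_orth_to_neg[OF me that] s by simp
    show "\<bar>rform s y - S'.rform s y\<bar> < (1 + \<alpha> - 1) * (norm y)\<^sup>2" if "y \<noteq> 0" for y
      using close[OF that] mult_right_mono[of "min \<alpha> \<beta>" \<alpha> "(norm y)\<^sup>2"]
      by (simp add: abs_minus_commute)
  qed (rule lower)
  moreover have "length es \<le> length ps"
  proof (rule length_le_if_forms_close[where P = "S'.rform s" and Q = "rform s" and a = 1
        and b = "1 - \<beta>"])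
    show "orthonormal es" using el by (simp add: S'.eig_list_def)
    show "1 * (norm (lincomb c es))\<^sup>2 \<le> S'.rform s (lincomb c es)" for c
      using S'.norm_sq_le_rform_on_neg_span[OF el s(2)] by simp
    show "\<bar>S'.rform s y - rform s y\<bar> < (1 - (1 - \<beta>)) * (norm y)\<^sup>2" if "y \<noteq> 0" for y
      using close[OF that] mult_right_mono[of "min \<alpha> \<beta>" \<beta> "(norm y)\<^sup>2"] by simp
  qed (rule upper)
  ultimately show ?thesis using max_eig_list_0_length[OF mn] S'.max_eig_list_0_length[OF me] by simp
qed

text \<open>With \<open>s > -mu\<close>, \<open>rform s\<close> exceeds the squared norm by a fixed
margin on the span of the negative eigenvectors and falls short of it by a fixed margin
orthogonally to the nonpositive ones; both margins survive a small resolvent perturbation.\<close>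

lemma neg_count_stable:
  "\<exists>\<epsilon>>0. \<forall>D' T'. sa_operator sc ip D' T' mu \<longrightarrow>
     onorm (\<lambda>y. resolvent sc D' T' \<i> y - resolvent sc D T \<i> y) < \<epsilon> \<longrightarrow>
     neg_count \<le> sa_operator.neg_count sc D' T' \<and>
     sa_operator.neg_count sc D' T' \<le> neg_count + eig_mult sc D T 0"
proof -
  define s where "s = \<bar>mu\<bar> + 1"
  have s: "0 < s" "- s < mu" by (auto simp: s_def)
  obtain es0 where me0: "max_eig_list 0 es0" using max_eig_list_exists by blast
  have el0: "eig_list 0 es0" using me0 by (simp add: max_eig_list_def)
  obtain \<delta>0 where \<delta>0: "\<delta>0 > 0" "\<And>c. (1 + \<delta>0) * (norm (lincomb c es0))\<^sup>2 \<le> rform s (lincomb c es0)"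
    using rform_gt_on_neg_span[OF el0 s(2)] by blast
  obtain g es1 where g: "g > 0" "max_eig_list g es1" "length es1 = neg_count + eig_mult sc D T 0"
    using max_eig_list_above_0 by blast
  define \<delta>1 where "\<delta>1 = min (s * g) 1"
  have \<delta>1: "\<delta>1 > 0" using s g by (simp add: \<delta>1_def)
  define \<epsilon> where "\<epsilon> = min \<delta>0 \<delta>1 / (2 + s)"
  have "neg_count \<le> sa_operator.neg_count sc D' T' \<and>
      sa_operator.neg_count sc D' T' \<le> neg_count + eig_mult sc D T 0"
    if S': "sa_operator sc ip D' T' mu"
      and \<rho>: "onorm (\<lambda>y. resolvent sc D' T' \<i> y - resolvent sc D T \<i> y) < \<epsilon>" for D' T'
  proof -
    have close: "\<bar>sa_operator.rform sc ip D' T' s y - rform s y\<bar> < min \<delta>0 \<delta>1 * (norm y)\<^sup>2"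
      if "y \<noteq> 0" for y
    proof -
      have "\<bar>sa_operator.rform sc ip D' T' s y - rform s y\<bar>
          \<le> (2 + s) * onorm (\<lambda>y. resolvent sc D' T' \<i> y - resolvent sc D T \<i> y) * (norm y)\<^sup>2"
        using rform_diff_le[OF S'] s by simp
      also have "\<dots> < (2 + s) * \<epsilon> * (norm y)\<^sup>2"
        using \<rho> s that by (intro mult_strict_right_mono mult_strict_left_mono) auto
      finally show ?thesis using s by (simp add: \<epsilon>_def)
    qed
    have upper: "rform s y \<le> (1 - \<delta>1) * (norm y)\<^sup>2" if "orth_to es1 y" for y
      unfolding \<delta>1_def by (rule rform_le_if_orth_to_gap[OF g(2) that g(1) s(1)])
    show ?thesis
      using neg_count_bounds_if_rform_close[where ps = es1 and \<beta> = \<delta>1, OF S' s me0 \<delta>0(2)] upper close g(3)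
      by simp
  qed
  moreover have "\<epsilon> > 0" using \<delta>0 \<delta>1 s by (simp add: \<epsilon>_def)
  ultimately show ?thesis by blast
qed

end

section \<open>Operator functions\<close>

lemma sum_below_near:
  fixes E :: "real set"
  assumes "finite E"
  shows "\<exists>\<delta>>0. \<forall>u. \<bar>u - t\<bar> < \<delta> \<longrightarrow>
    (\<Sum>l\<in>{l\<in>E. l < u}. k l) = (\<Sum>l\<in>{l\<in>E. l < t}. k l) + (if t < u \<and> t \<in> E then k t else 0)"
proof -
  obtain \<delta> where \<delta>: "\<delta> > 0" "\<And>l. l \<in> E \<Longrightarrow> l \<noteq> t \<Longrightarrow> \<delta> \<le> dist t l"
    using finite_set_avoid[OF assms, of t] by blast
  have "(\<Sum>l\<in>{l\<in>E. l < u}. k l) = (\<Sum>l\<in>{l\<in>E. l < t}. k l) + (if t < u \<and> t \<in> E then k t else 0)"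
    if u: "\<bar>u - t\<bar> < \<delta>" for u
  proof -
    have "{l\<in>E. l < u} = {l\<in>E. l < t} \<union> (if t < u \<and> t \<in> E then {t} else {})"
      using u \<delta>(2) by (force simp: dist_real_def)
    thus ?thesis using assms by (simp add: sum.union_disjoint)
  qed
  thus ?thesis using \<delta>(1) by blast
qed

locale operator_function = hilbert_space sc ip for sc :: "complex \<Rightarrow> 'h::banach \<Rightarrow> 'h" and ip +
  fixes \<sigma> \<tau> :: ereal and D :: "real \<Rightarrow> 'h set" and T :: "real \<Rightarrow> 'h \<Rightarrow> 'h"
    and Df :: "'h set" and f :: "real \<Rightarrow> 'h \<Rightarrow> real"
  assumes standing: "standing_assumptions sc ip \<sigma> \<tau> D T"
    and closure_form: "\<And>l. \<sigma> < ereal l \<Longrightarrow> ereal l < \<tau> \<Longrightarrow>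
           is_form_closure (D l) (\<lambda>y. Re (ip (T l y) y)) Df (f l)"
    and monotone: "\<And>l1 l2 y. \<sigma> < ereal l1 \<Longrightarrow> l1 < l2 \<Longrightarrow> ereal l2 < \<tau> \<Longrightarrow>
           y \<in> Df \<Longrightarrow> y \<noteq> 0 \<Longrightarrow> f l1 y - f l2 y > 0"
begin

definition I :: "real set" where
  "I = {l. \<sigma> < ereal l \<and> ereal l < \<tau>}"

abbreviation nu :: "real \<Rightarrow> nat" where
  "nu l \<equiv> nu_F sc D T l"

abbreviation mult_F :: "real \<Rightarrow> nat" where
  "mult_F l \<equiv> eig_mult sc (D l) (T l) 0"

lemma I_convex: "a \<in> I \<Longrightarrow> b \<in> I \<Longrightarrow> a \<le> l \<Longrightarrow> l \<le> b \<Longrightarrow> l \<in> I"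
  unfolding I_def using less_le_trans[of \<sigma> "ereal a" "ereal l"] le_less_trans[of "ereal l" "ereal b" \<tau>]
  by auto

lemma locally_sa_operator:
  assumes "l0 \<in> I"
  shows "\<exists>mu U. open U \<and> l0 \<in> U \<and> U \<subseteq> I \<and> (\<forall>l\<in>U. sa_operator sc ip (D l) (T l) mu)"
proof -
  obtain mu U where U: "open U" "l0 \<in> U" "closure U \<subseteq> I"
      "\<forall>l\<in>U. \<forall>x\<in>D l. 0 \<le> Re (ip (T l x - sc (complex_of_real mu) x) x)"
    using standing assms unfolding standing_assumptions_def Let_def I_def by blast
  have UI: "U \<subseteq> I" using U(3) closure_subset by blast
  have "self_adjoint sc ip (D l) (T l) \<and> compact_resolvent sc (D l) (T l)" if "l \<in> U" for l
    using standing that UI unfolding standing_assumptions_def Let_def I_def by blast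
  hence "sa_operator sc ip (D l) (T l) mu" if "l \<in> U" for l
    unfolding sa_operator_def sa_operator_axioms_def using hilbert_space_axioms U(4) that by blast
  thus ?thesis using U UI by blast
qed

lemma sa_operator_at: "l \<in> I \<Longrightarrow> \<exists>mu. sa_operator sc ip (D l) (T l) mu"
  using locally_sa_operator by blast

lemma resolvent_continuous:
  "l0 \<in> I \<Longrightarrow> ((\<lambda>l. onorm (\<lambda>y. resolvent sc (D l) (T l) \<i> y - resolvent sc (D l0) (T l0) \<i> y))
     \<longlongrightarrow> 0) (at l0 within I)"
  using standing unfolding standing_assumptions_def Let_def I_def by blast

lemma nu_eq_neg_count: "sa_operator sc ip (D l) (T l) mu \<Longrightarrow> nu l = sa_operator.neg_count sc (D l) (T l)"
  by (simp add: nu_F_def sa_operator.neg_count_def)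

lemma form_closure_at:
  assumes "l \<in> I"
  shows "is_form_closure (D l) (sa_operator.qform ip (T l)) Df (f l)"
proof -
  obtain mu where "sa_operator sc ip (D l) (T l) mu" using sa_operator_at[OF assms] by blast
  then interpret S: sa_operator sc ip "D l" "T l" mu .
  have "S.qform = (\<lambda>y. Re (ip (T l y) y))" by (simp add: fun_eq_iff S.qform_def)
  thus ?thesis using closure_form assms by (simp add: I_def)
qed

lemma mult_F_pos: "l \<in> I \<Longrightarrow> is_eigenvalue sc (D l) (T l) 0 \<Longrightarrow> 1 \<le> mult_F l"
  using sa_operator_at sa_operator.eig_mult_pos by metis

lemma mult_F_eq_0: "l \<in> I \<Longrightarrow> \<not> is_eigenvalue sc (D l) (T l) 0 \<Longrightarrow> mult_F l = 0"
  using sa_operator_at sa_operator.eig_mult_eq_0 by metis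

text \<open>On the span \<open>Y\<close> of the nonpositive eigenvectors of \<open>F(l1)\<close> the form \<open>f l1\<close> is \<open>\<le> 0\<close>, so
\<open>f l2 < 0\<close> on \<open>Y - {0}\<close>; by the variational principle \<open>Y\<close> meets the orthogonal complement of the
negative eigenvectors of \<open>F(l2)\<close> only in \<open>0\<close>.\<close>

lemma nu_plus_mult_F_le:
  assumes l1: "l1 \<in> I" and l2: "l2 \<in> I" and lt: "l1 < l2"
  shows "nu l1 + mult_F l1 \<le> nu l2"
proof (rule ccontr)
  assume "\<not> nu l1 + mult_F l1 \<le> nu l2"
  obtain mu1 mu2 where S1: "sa_operator sc ip (D l1) (T l1) mu1"
    and S2: "sa_operator sc ip (D l2) (T l2) mu2"
    using sa_operator_at[OF l1] sa_operator_at[OF l2] by blast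
  interpret S1: sa_operator sc ip "D l1" "T l1" mu1 by (rule S1)
  interpret S2: sa_operator sc ip "D l2" "T l2" mu2 by (rule S2)
  obtain g es where g: "g > 0" "S1.max_eig_list g es" "length es = nu l1 + mult_F l1"
    and nonpos: "\<And>e. e \<in> set es \<Longrightarrow> S1.qform e \<le> 0"
    using S1.max_eig_list_above_0 nu_eq_neg_count[OF S1] by auto
  obtain es2 where me2: "S2.max_eig_list 0 es2" using S2.max_eig_list_exists by blast
  obtain c where y: "lincomb c es \<noteq> 0" "orth_to es2 (lincomb c es)"
    using exists_lincomb_orth_to[of es es2] g(2,3) S2.max_eig_list_0_length[OF me2]
      nu_eq_neg_count[OF S2] \<open>\<not> _ \<le> _\<close> by (auto simp: S1.max_eig_list_def S1.eig_list_def)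
  define y where "y = lincomb c es"
  have el: "S1.eig_list g es" using g(2) by (simp add: S1.max_eig_list_def)
  have "S1.qform (es!j) \<le> 0" if "j < length es" for j using nonpos nth_mem that by blast
  hence "S1.qform y \<le> 0"
    unfolding y_def S1.qform_lincomb_eig_list[OF el] by (intro sum_nonpos mult_nonneg_nonpos) auto
  moreover have "y \<in> Df" "f l1 y = S1.qform y"
    using S1.form_closure_on_D[OF form_closure_at[OF l1] S1.lincomb_eig_list_mem[OF el]]
    by (auto simp: y_def)
  moreover have "0 \<le> f l2 y"
    using S2.max_eig_list_variational_closure[OF form_closure_at[OF l2] me2 \<open>y \<in> Df\<close>] y
    by (simp add: y_def)
  ultimately show False using monotone[of l1 l2 y] l1 l2 lt y(1) by (simp add: I_def y_def)
qed

lemma nu_local_bounds: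
  assumes l0: "l0 \<in> I"
  shows "\<exists>\<delta>>0. \<forall>l\<in>I. \<bar>l - l0\<bar> < \<delta> \<longrightarrow> nu l0 \<le> nu l \<and> nu l \<le> nu l0 + mult_F l0"
proof -
  obtain mu U where U: "open U" "l0 \<in> U" "U \<subseteq> I" "\<And>l. l \<in> U \<Longrightarrow> sa_operator sc ip (D l) (T l) mu"
    using locally_sa_operator[OF l0] by blast
  interpret S0: sa_operator sc ip "D l0" "T l0" mu by (rule U(4)[OF U(2)])
  obtain \<epsilon> where \<epsilon>: "\<epsilon> > 0" "\<And>D' T'. sa_operator sc ip D' T' mu \<Longrightarrow>
      onorm (\<lambda>y. resolvent sc D' T' \<i> y - resolvent sc (D l0) (T l0) \<i> y) < \<epsilon> \<Longrightarrow>
      S0.neg_count \<le> sa_operator.neg_count sc D' T' \<and>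
      sa_operator.neg_count sc D' T' \<le> S0.neg_count + mult_F l0"
    using S0.neg_count_stable by blast
  obtain d1 where d1: "d1 > 0" "\<And>l. l \<in> I \<Longrightarrow> l \<noteq> l0 \<Longrightarrow> dist l l0 < d1 \<Longrightarrow>
      onorm (\<lambda>y. resolvent sc (D l) (T l) \<i> y - resolvent sc (D l0) (T l0) \<i> y) < \<epsilon>"
    using order_tendstoD(2)[OF resolvent_continuous[OF l0] \<epsilon>(1)] unfolding eventually_at by blast
  obtain d2 where d2: "d2 > 0" "ball l0 d2 \<subseteq> U" using U(1,2) open_contains_ball by blast
  have "nu l0 \<le> nu l \<and> nu l \<le> nu l0 + mult_F l0" if l: "l \<in> I" "\<bar>l - l0\<bar> < min d1 d2" for l
  proof (cases "l = l0")
    case False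
    have "l \<in> U" using d2 l by (auto simp: dist_real_def abs_minus_commute)
    thus ?thesis using \<epsilon>(2)[OF U(4) d1(2)] l False
      nu_eq_neg_count[OF U(4)] nu_eq_neg_count[OF U(4)[OF U(2)]] by (auto simp: dist_real_def)
  qed simp
  thus ?thesis using d1(1) d2(1) by (intro exI[of _ "min d1 d2"]) auto
qed

lemma nu_near:
  assumes l0: "l0 \<in> I"
  shows "\<exists>\<delta>>0. \<forall>l\<in>I. \<bar>l - l0\<bar> < \<delta> \<longrightarrow> nu l = (if l \<le> l0 then nu l0 else nu l0 + mult_F l0)"
proof -
  obtain \<delta> where \<delta>: "\<delta> > 0" "\<And>l. l \<in> I \<Longrightarrow> \<bar>l - l0\<bar> < \<delta> \<Longrightarrow> nu l0 \<le> nu l \<and> nu l \<le> nu l0 + mult_F l0"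
    using nu_local_bounds[OF l0] by blast
  have "nu l = (if l \<le> l0 then nu l0 else nu l0 + mult_F l0)" if l: "l \<in> I" "\<bar>l - l0\<bar> < \<delta>" for l
  proof (cases l0 l rule: linorder_cases)
    case less
    thus ?thesis using \<delta>(2)[OF l] nu_plus_mult_F_le[OF l0 l(1)] by simp
  next
    case greater
    thus ?thesis using \<delta>(2)[OF l] nu_plus_mult_F_le[OF l(1) l0] by simp
  qed simp
  thus ?thesis using \<delta>(1) by blast
qed

lemma nu_plus_sum_mult_F_le:
  assumes "finite S" "a \<in> I" "b \<in> I" "a \<le> b" "S \<subseteq> {a..<b}"
  shows "nu a + (\<Sum>l\<in>S. mult_F l) \<le> nu b"
  using assms
proof (induction S arbitrary: b rule: finite_linorder_max_induct)
  case empty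
  thus ?case using nu_plus_mult_F_le[of a b] by (cases "a = b") auto
next
  case (insert m A)
  have m: "a \<le> m" "m < b" "m \<in> I" using insert.prems I_convex[of a b m] by auto
  have "A \<subseteq> {a..<m}" using insert.prems(4) insert.hyps(2) by force
  hence "nu a + (\<Sum>l\<in>A. mult_F l) \<le> nu m" using insert.IH[of m] insert.prems m by auto
  moreover have "nu m + mult_F m \<le> nu b" using nu_plus_mult_F_le[OF m(3) insert.prems(2) m(2)] .
  moreover have "m \<notin> A" using insert.hyps(2) by auto
  ultimately show ?case using insert.hyps(1) by simp
qed

lemma finite_eigenvalues_between:
  assumes "x1 \<in> I" "x2 \<in> I" "x1 \<le> x2"
  shows "finite {l. x1 \<le> l \<and> l < x2 \<and> is_eigenvalue sc (D l) (T l) 0}"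
proof -
  have "finite {l. x1 \<le> l \<and> l < x2 \<and> is_eigenvalue sc (D l) (T l) 0} \<and>
      card {l. x1 \<le> l \<and> l < x2 \<and> is_eigenvalue sc (D l) (T l) 0} \<le> nu x2"
  proof (rule finite_if_finite_subsets_card_bdd)
    fix G assume G: "G \<subseteq> {l. x1 \<le> l \<and> l < x2 \<and> is_eigenvalue sc (D l) (T l) 0}" "finite G"
    have "card G = (\<Sum>l\<in>G. 1)" by simp
    also have "\<dots> \<le> (\<Sum>l\<in>G. mult_F l)"
    proof (rule sum_mono)
      fix l assume "l \<in> G"
      hence "l \<in> I" "is_eigenvalue sc (D l) (T l) 0" using G(1) I_convex[OF assms(1,2), of l] by auto
      thus "1 \<le> mult_F l" by (rule mult_F_pos)
    qed
    also have "\<dots> \<le> nu x2"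
    proof -
      have "G \<subseteq> {x1..<x2}" using G(1) by auto
      thus ?thesis using nu_plus_sum_mult_F_le[OF G(2) assms] by simp
    qed
    finally show "card G \<le> nu x2" .
  qed
  thus ?thesis ..
qed

text \<open>\<open>nu t\<close> minus the multiplicities of the eigenvalues in \<open>[x1, t)\<close> is locally constant on
\<open>[x1, x2]\<close> by \<open>nu_near\<close> and \<open>sum_below_near\<close>, hence constant.\<close>

lemma nu_eq_nu_plus_N_F:
  assumes x1: "x1 \<in> I" and x2: "x2 \<in> I" and le: "x1 \<le> x2"
  shows "nu x2 = nu x1 + N_F sc D T x1 x2"
proof -
  define E where "E = {l. x1 \<le> l \<and> l < x2 \<and> is_eigenvalue sc (D l) (T l) 0}"
  have finE: "finite E" unfolding E_def by (rule finite_eigenvalues_between[OF assms])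
  define h where "h t = int (nu t) - int (\<Sum>l\<in>{l\<in>E. l < t}. mult_F l)" for t
  have "h x1 = h x2"
  proof (rule connected_local_const[of "{x1..x2}"])
    show "\<forall>t\<in>{x1..x2}. \<forall>\<^sub>F u in at t within {x1..x2}. h t = h u"
    proof
      fix t assume t: "t \<in> {x1..x2}"
      hence tI: "t \<in> I" using I_convex[OF x1 x2] by auto
      obtain \<delta> where \<delta>: "\<delta> > 0"
        "\<And>u. u \<in> I \<Longrightarrow> \<bar>u - t\<bar> < \<delta> \<Longrightarrow> nu u = (if u \<le> t then nu t else nu t + mult_F t)"
        using nu_near[OF tI] by blast
      obtain \<delta>' where \<delta>': "\<delta>' > 0" "\<And>u. \<bar>u - t\<bar> < \<delta>' \<Longrightarrow> (\<Sum>l\<in>{l\<in>E. l < u}. mult_F l) =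
          (\<Sum>l\<in>{l\<in>E. l < t}. mult_F l) + (if t < u \<and> t \<in> E then mult_F t else 0)"
        using sum_below_near[OF finE] by blast
      have "h t = h u" if u: "u \<in> {x1..x2}" "\<bar>u - t\<bar> < min \<delta> \<delta>'" for u
      proof -
        have "t < u \<Longrightarrow> t \<notin> E \<Longrightarrow> mult_F t = 0"
          using mult_F_eq_0[OF tI] t u(1) by (auto simp: E_def)
        thus ?thesis using \<delta>(2)[of u] \<delta>'(2)[of u] u I_convex[OF x1 x2] by (auto simp: h_def)
      qed
      thus "\<forall>\<^sub>F u in at t within {x1..x2}. h t = h u"
        using \<delta>(1) \<delta>'(1) unfolding eventually_at dist_real_def
        by (intro exI[of _ "min \<delta> \<delta>'"]) auto
    qed
  qed (use le in auto)
  moreover have "{l\<in>E. l < x1} = {}" "{l\<in>E. l < x2} = E" by (auto simp: E_def)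
  ultimately have "int (nu x2) = int (nu x1) + int (\<Sum>l\<in>E. mult_F l)" by (simp add: h_def)
  moreover have "N_F sc D T x1 x2 = (\<Sum>l\<in>E. mult_F l)" by (simp add: N_F_def E_def)
  ultimately show ?thesis by linarith
qed

end

theorem theorem2:
  fixes sc :: "complex \<Rightarrow> 'h::banach \<Rightarrow> 'h"
    and ip :: "'h \<Rightarrow> 'h \<Rightarrow> complex"
    and \<sigma> \<tau> :: ereal
    and D :: "real \<Rightarrow> 'h set" and T :: "real \<Rightarrow> 'h \<Rightarrow> 'h"
    and Df :: "'h set" and f :: "real \<Rightarrow> 'h \<Rightarrow> real"
    and \<xi>1 \<xi>2 :: real
  assumes hilbert: "complex_hilbert sc ip"
    and standing: "standing_assumptions sc ip \<sigma> \<tau> D T"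
    and closure_form: "\<And>l. \<sigma> < ereal l \<Longrightarrow> ereal l < \<tau> \<Longrightarrow>
           is_form_closure (D l) (\<lambda>y. Re (ip (T l y) y)) Df (f l)"
    and monotone: "\<And>l1 l2 y. \<sigma> < ereal l1 \<Longrightarrow> l1 < l2 \<Longrightarrow> ereal l2 < \<tau> \<Longrightarrow>
           y \<in> Df \<Longrightarrow> y \<noteq> 0 \<Longrightarrow> f l1 y - f l2 y > 0"
    and xi: "\<sigma> < ereal \<xi>1" "\<xi>1 < \<xi>2" "ereal \<xi>2 < \<tau>"
  shows "int (N_F sc D T \<xi>1 \<xi>2) = int (nu_F sc D T \<xi>2) - int (nu_F sc D T \<xi>1)"
proof -
  interpret operator_function sc ip \<sigma> \<tau> D T Df f
    using hilbert standing closure_form monotone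
    by (simp add: operator_function_def operator_function_axioms_def hilbert_space_def)
  have "\<xi>1 \<in> I" "\<xi>2 \<in> I"
    using xi less_trans[of \<sigma> "ereal \<xi>1" "ereal \<xi>2"] less_trans[of "ereal \<xi>1" "ereal \<xi>2" \<tau>]
    by (auto simp: I_def)
  thus ?thesis using nu_eq_nu_plus_N_F[of \<xi>1 \<xi>2] xi(2) by simp
qed

end
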